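(* (a) The Lie superalgebra $\mathfrak g=W(m,n)$ is generated by $\mathfrak g_{-1}$, $\mathfrak g_0$ and $\mathfrak g_1$. (b) A linear map $\gamma:\mathfrak g_0\to\mathbb F$ satisfies $\gamma([X,Y])=\mathrm{str}\big(\mathrm{ad}X\circ\mathrm{ad}Y|_{\mathfrak g_0}\big)$ for all $X\in\mathfrak g_1$, $Y\in\mathfrak g_{-1}$ if and only if $\gamma(x_i\partial_j)=\delta_{ij}$, $\gamma(y_r\partial_j)=0$, $\gamma(x_iD_t)=0$ and $\gamma(y_rD_t)=-\delta_{rt}$ for all $i,j\in[1,m]$, $r,t\in[1,n]$. Consequently this $\gamma$ (the supertrace of $\mathfrak{gl}(m|n)$) is a semi-infinite character of $W(m,n)$, and it is the only one; its restriction to $\mathfrak h$ is $\mathcal E=\sum_{i=1}^m\epsilon_i-\sum_{j=1}^n\delta_j$.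
   Context: $\mathbb F$ algebraically closed of characteristic $0$, $m,n\ge1$. $\mathcal R=\mathbb F[x_1,\dots,x_m]\otimes\Lambda(y_1,\dots,y_n)$ ($x_i$ even, $y_s$ odd), graded by $\deg x_i=\deg y_s=1$. $\mathfrak g=W(m,n)$ is the Lie superalgebra of superderivations of $\mathcal R$, free over $\mathcal R$ on even $\partial_i$ ($\partial_ix_j=\delta_{ij}$, $\partial_iy_s=0$) and odd $D_t$ ($D_ty_s=\delta_{ts}$, $D_tx_j=0$); $\mathfrak g=\bigoplus_{i\ge-1}\mathfrak g_i$ with $\mathfrak g_i$ spanned by $f\partial_j,fD_t$, $f$ homogeneous of degree $i+1$, so $\mathfrak g_0=\mathrm{span}\{x_i\partial_j,y_r\partial_j,x_iD_t,y_rD_t\}\cong\mathfrak{gl}(m|n)$. $\mathrm{str}$ denotes the supertrace of an even linear endomorphism of the superspace $\mathfrak g_0$. For a $\mathbb Z$-graded Lie superalgebra $\mathbf g=\bigoplus_i\mathbf g_i$ with finite-dimensional pieces, a character $\gamma:\mathbf g_0\to\mathbb F$ is semi-infinite if (SI-1) $\mathbf g$ is generated by $\mathbf g_1,\mathbf g_0,\mathbf g_{-1}$ and (SI-2) $\gamma([X,Y])=\mathrm{str}(\mathrm{ad}X\circ\mathrm{ad}Y|_{\mathbf g_0})$ for all $X\in\mathbf g_1$, $Y\in\mathbf g_{-1}$. $\epsilon_i,\delta_s$ are the functionals on $\mathfrak h=\mathrm{span}\{x_i\partial_i,y_sD_s\}$ dual to this basis. *)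

theory Defs
  imports "HOL-Computational_Algebra.Polynomial"
begin

definition alg_closed :: "'a::field itself \<Rightarrow> bool" where
  "alg_closed _ \<longleftrightarrow> (\<forall>p::'a poly. degree p > 0 \<longrightarrow> (\<exists>x. poly p x = 0))"

text \<open>A monomial x^alpha y_S (S an increasingly ordered product y_{s1}...y_{sk}) is
  represented by the pair (alpha, S). An element of R is its coefficient function.\<close>

type_synonym mono = "(nat \<Rightarrow> nat) \<times> nat set"
type_synonym 'a rel = "mono \<Rightarrow> 'a"

definition valid_mono :: "nat \<Rightarrow> nat \<Rightarrow> mono \<Rightarrow> bool" where
  "valid_mono m n c \<longleftrightarrow> (\<forall>i. fst c i \<noteq> 0 \<longrightarrow> 1 \<le> i \<and> i \<le> m) \<and> snd c \<subseteq> {1..n}"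

definition mono_deg :: "nat \<Rightarrow> mono \<Rightarrow> nat" where
  "mono_deg m c = (\<Sum>i=1..m. fst c i) + card (snd c)"

text \<open>sign of y_T * y_U = ysgn T U * y_(T union U) for disjoint T, U\<close>
definition ysgn :: "nat set \<Rightarrow> nat set \<Rightarrow> 'a::comm_ring_1" where
  "ysgn T U = (-1) ^ card {(s, u). s \<in> T \<and> u \<in> U \<and> u < s}"

definition rmul :: "'a::comm_ring_1 rel \<Rightarrow> 'a rel \<Rightarrow> 'a rel" where
  "rmul p q c = (\<Sum>\<beta>\<in>{\<beta>. \<forall>i. \<beta> i \<le> fst c i}. \<Sum>T\<in>Pow (snd c).
      ysgn T (snd c - T) * p (\<beta>, T) * q (\<lambda>i. fst c i - \<beta> i, snd c - T))"

definition pd :: "nat \<Rightarrow> 'a::comm_ring_1 rel \<Rightarrow> 'a rel" where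
  "pd j p c = of_nat (fst c j + 1) * p ((fst c)(j := fst c j + 1), snd c)"

text \<open>the odd (left) derivation D_t\<close>
definition Dd :: "nat \<Rightarrow> 'a::comm_ring_1 rel \<Rightarrow> 'a rel" where
  "Dd t p c = (if t \<in> snd c then 0
     else (-1) ^ card {s \<in> snd c. s < t} * p (fst c, insert t (snd c)))"

text \<open>Inl j stands for partial_j, Inr t for D_t. An element of W(m,n) is
  sum_j f_j partial_j + sum_t g_t D_t, represented by k |-> coefficient of k.\<close>

type_synonym der = "nat + nat"
type_synonym 'a wel = "der \<Rightarrow> 'a rel"

definition valid_der :: "nat \<Rightarrow> nat \<Rightarrow> der \<Rightarrow> bool" where
  "valid_der m n k = (case k of Inl j \<Rightarrow> 1 \<le> j \<and> j \<le> m | Inr t \<Rightarrow> 1 \<le> t \<and> t \<le> n)"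

definition Wc :: "nat \<Rightarrow> nat \<Rightarrow> 'a::comm_ring_1 wel set" where
  "Wc m n = {E. finite {(k, c). E k c \<noteq> 0} \<and>
     (\<forall>k c. E k c \<noteq> 0 \<longrightarrow> valid_der m n k \<and> valid_mono m n c)}"

definition wzero :: "'a::comm_ring_1 wel" where "wzero = (\<lambda>k c. 0)"
definition wadd :: "'a::comm_ring_1 wel \<Rightarrow> 'a wel \<Rightarrow> 'a wel" where
  "wadd E F = (\<lambda>k c. E k c + F k c)"
definition wsmul :: "'a::comm_ring_1 \<Rightarrow> 'a wel \<Rightarrow> 'a wel" where
  "wsmul a E = (\<lambda>k c. a * E k c)"

definition par :: "der \<Rightarrow> mono \<Rightarrow> nat" where
  "par k c = (card (snd c) + (case k of Inl _ \<Rightarrow> 0 | Inr _ \<Rightarrow> 1)) mod 2"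

definition proj :: "nat \<Rightarrow> 'a::comm_ring_1 wel \<Rightarrow> 'a wel" where
  "proj p E = (\<lambda>k c. if par k c = p then E k c else 0)"

definition act :: "nat \<Rightarrow> nat \<Rightarrow> 'a::comm_ring_1 wel \<Rightarrow> 'a rel \<Rightarrow> 'a rel" where
  "act m n E h = (\<lambda>c. (\<Sum>j=1..m. rmul (E (Inl j)) (pd j h) c)
                    + (\<Sum>t=1..n. rmul (E (Inr t)) (Dd t h) c))"

text \<open>supercommutator of homogeneous elements of parities p, q, computed on the generators\<close>
definition hbr :: "nat \<Rightarrow> nat \<Rightarrow> nat \<Rightarrow> nat \<Rightarrow> 'a::comm_ring_1 wel \<Rightarrow> 'a wel \<Rightarrow> 'a wel" where
  "hbr m n p q E F = (\<lambda>k c. act m n E (F k) c - (-1) ^ (p * q) * act m n F (E k) c)"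

definition wbr :: "nat \<Rightarrow> nat \<Rightarrow> 'a::comm_ring_1 wel \<Rightarrow> 'a wel \<Rightarrow> 'a wel" where
  "wbr m n E F = (\<lambda>k c. \<Sum>p\<in>{0,1}. \<Sum>q\<in>{0,1}. hbr m n p q (proj p E) (proj q F) k c)"

definition gpiece :: "nat \<Rightarrow> nat \<Rightarrow> int \<Rightarrow> 'a::comm_ring_1 wel set" where
  "gpiece m n i = {E \<in> Wc m n. \<forall>k c. E k c \<noteq> 0 \<longrightarrow> int (mono_deg m c) = i + 1}"

inductive_set lie_gen :: "nat \<Rightarrow> nat \<Rightarrow> 'a::comm_ring_1 wel set \<Rightarrow> 'a wel set"
  for m n A where
  gen_base: "a \<in> A \<Longrightarrow> a \<in> lie_gen m n A"
| gen_zero: "wzero \<in> lie_gen m n A"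
| gen_add: "a \<in> lie_gen m n A \<Longrightarrow> b \<in> lie_gen m n A \<Longrightarrow> wadd a b \<in> lie_gen m n A"
| gen_smul: "a \<in> lie_gen m n A \<Longrightarrow> wsmul r a \<in> lie_gen m n A"
| gen_br: "a \<in> lie_gen m n A \<Longrightarrow> b \<in> lie_gen m n A \<Longrightarrow> wbr m n a b \<in> lie_gen m n A"

definition wbasis :: "mono \<Rightarrow> der \<Rightarrow> 'a::comm_ring_1 wel" where
  "wbasis c k = (\<lambda>k' c'. if k' = k \<and> c' = c then 1 else 0)"

definition xmono :: "nat \<Rightarrow> mono" where "xmono i = ((\<lambda>l. if l = i then 1 else 0), {})"
definition ymono :: "nat \<Rightarrow> mono" where "ymono r = ((\<lambda>l. 0), {r})"

definition xd :: "nat \<Rightarrow> nat \<Rightarrow> 'a::comm_ring_1 wel" where "xd i j = wbasis (xmono i) (Inl j)"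
definition yd :: "nat \<Rightarrow> nat \<Rightarrow> 'a::comm_ring_1 wel" where "yd r j = wbasis (ymono r) (Inl j)"
definition xD :: "nat \<Rightarrow> nat \<Rightarrow> 'a::comm_ring_1 wel" where "xD i t = wbasis (xmono i) (Inr t)"
definition yD :: "nat \<Rightarrow> nat \<Rightarrow> 'a::comm_ring_1 wel" where "yD r t = wbasis (ymono r) (Inr t)"

definition g0_basis :: "nat \<Rightarrow> nat \<Rightarrow> (mono \<times> der) set" where
  "g0_basis m n = {(c, k). valid_mono m n c \<and> valid_der m n k \<and> mono_deg m c = 1}"

text \<open>str A = tr(A restricted to the even part) - tr(A restricted to the odd part),
  computed in the homogeneous basis\<close>
definition str0 :: "nat \<Rightarrow> nat \<Rightarrow> ('a::comm_ring_1 wel \<Rightarrow> 'a wel) \<Rightarrow> 'a" where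
  "str0 m n A = (\<Sum>(c, k)\<in>g0_basis m n. (-1) ^ par k c * A (wbasis c k) k c)"

definition linear_g0 :: "nat \<Rightarrow> nat \<Rightarrow> ('a::comm_ring_1 wel \<Rightarrow> 'a) \<Rightarrow> bool" where
  "linear_g0 m n \<gamma> \<longleftrightarrow>
     (\<forall>a\<in>gpiece m n 0. \<forall>b\<in>gpiece m n 0. \<gamma> (wadd a b) = \<gamma> a + \<gamma> b) \<and>
     (\<forall>r. \<forall>a\<in>gpiece m n 0. \<gamma> (wsmul r a) = r * \<gamma> a)"

definition character_g0 :: "nat \<Rightarrow> nat \<Rightarrow> ('a::comm_ring_1 wel \<Rightarrow> 'a) \<Rightarrow> bool" where
  "character_g0 m n \<gamma> \<longleftrightarrow> linear_g0 m n \<gamma> \<and>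
     (\<forall>a\<in>gpiece m n 0. \<forall>b\<in>gpiece m n 0. \<gamma> (wbr m n a b) = 0)"

definition SI1 :: "nat \<Rightarrow> nat \<Rightarrow> 'a::comm_ring_1 itself \<Rightarrow> bool" where
  "SI1 m n _ \<longleftrightarrow>
     lie_gen m n (gpiece m n (-1) \<union> gpiece m n 0 \<union> gpiece m n 1) = (Wc m n :: 'a wel set)"

definition SI2 :: "nat \<Rightarrow> nat \<Rightarrow> ('a::comm_ring_1 wel \<Rightarrow> 'a) \<Rightarrow> bool" where
  "SI2 m n \<gamma> \<longleftrightarrow> (\<forall>X\<in>gpiece m n 1. \<forall>Y\<in>gpiece m n (-1).
      \<gamma> (wbr m n X Y) = str0 m n (\<lambda>Z. wbr m n X (wbr m n Y Z)))"

definition semi_infinite_W :: "nat \<Rightarrow> nat \<Rightarrow> ('a::comm_ring_1 wel \<Rightarrow> 'a) \<Rightarrow> bool" where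
  "semi_infinite_W m n \<gamma> \<longleftrightarrow> character_g0 m n \<gamma> \<and> SI1 m n TYPE('a) \<and> SI2 m n \<gamma>"

definition gamma_values :: "nat \<Rightarrow> nat \<Rightarrow> ('a::comm_ring_1 wel \<Rightarrow> 'a) \<Rightarrow> bool" where
  "gamma_values m n \<gamma> \<longleftrightarrow>
     (\<forall>i\<in>{1..m}. \<forall>j\<in>{1..m}. \<gamma> (xd i j) = (if i = j then 1 else 0)) \<and>
     (\<forall>r\<in>{1..n}. \<forall>j\<in>{1..m}. \<gamma> (yd r j) = 0) \<and>
     (\<forall>i\<in>{1..m}. \<forall>t\<in>{1..n}. \<gamma> (xD i t) = 0) \<and>
     (\<forall>r\<in>{1..n}. \<forall>t\<in>{1..n}. \<gamma> (yD r t) = (if r = t then -1 else 0))"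

definition h_elem :: "nat \<Rightarrow> nat \<Rightarrow> (nat \<Rightarrow> 'a::comm_ring_1) \<Rightarrow> (nat \<Rightarrow> 'a) \<Rightarrow> 'a wel" where
  "h_elem m n a b = (\<lambda>k c. (\<Sum>i=1..m. a i * xd i i k c) + (\<Sum>s=1..n. b s * yD s s k c))"

end

theory Submission
  imports Defs
begin

text \<open>
  (a) Induct on the degree of \<open>f\<close>. A basis field \<open>f k\<close> of degree at least 3 is obtained by
  splitting off a quadratic factor \<open>q\<close> of \<open>f\<close>: for \<open>k = D\<^sub>t\<close> the bracket
  \<open>[q \<partial>\<^sub>1, x\<^sub>1 (f/q) D\<^sub>t]\<close> is a nonzero integer multiple of \<open>f D\<^sub>t\<close> (this is where characteristic 0
  is used), and for \<open>k = \<partial>\<^sub>j\<close> the bracket \<open>[q D\<^sub>1, y\<^sub>1 (f/q) \<partial>\<^sub>j]\<close> is \<open>\<plusminus>f \<partial>\<^sub>j\<close> plus a multiple of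
  a \<open>D\<^sub>1\<close>-field of the same degree, which is covered by the first case.

  (b) Both sides of SI-2 are bilinear. For \<open>X = f k\<close> with \<open>f\<close> quadratic and \<open>Y\<close> a constant field,
  computing \<open>[X, Y]\<close> and the supertrace of \<open>ad X \<circ> ad Y\<close> on the basis of \<open>g\<^sub>0\<close> shows that SI-2
  holds for the supertrace \<open>\<gamma>\<^sub>0\<close> of \<open>gl(m|n)\<close>. Conversely, \<open>X = x\<^sub>1 v k\<close> and \<open>Y = \<partial>\<^sub>1\<close> give
  \<open>[X, Y] = -(v\<^sub>1 + 1) v k\<close>, so SI-2 determines \<open>\<gamma>\<close> on every basis vector \<open>v k\<close> of \<open>g\<^sub>0\<close>.
  Finally \<open>\<gamma>\<^sub>0\<close> vanishes on \<open>[g\<^sub>0, g\<^sub>0]\<close>.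
\<close>

section \<open>Products and derivatives of monomials\<close>

definition mono_ind :: "mono \<Rightarrow> 'a::comm_ring_1 rel" where
  "mono_ind a = (\<lambda>x. if x = a then 1 else 0)"

definition mono_add :: "mono \<Rightarrow> mono \<Rightarrow> mono" where
  "mono_add a b = ((\<lambda>i. fst a i + fst b i), snd a \<union> snd b)"

definition mono_sign :: "mono \<Rightarrow> mono \<Rightarrow> 'a::comm_ring_1" where
  "mono_sign a b = (if snd a \<inter> snd b = {} then ysgn (snd a) (snd b) else 0)"

definition mono_one :: mono where "mono_one = ((\<lambda>_. 0), {})"

definition der_op :: "der \<Rightarrow> 'a::comm_ring_1 rel \<Rightarrow> 'a rel" where
  "der_op k = (case k of Inl j \<Rightarrow> pd j | Inr t \<Rightarrow> Dd t)"

text \<open>The derivative of the monomial \<open>b\<close> along \<open>k\<close> is \<open>der_coeff k b\<close> times the monomial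
  \<open>der_mono k b\<close>; the latter is meaningless when the coefficient vanishes.\<close>

definition der_coeff :: "der \<Rightarrow> mono \<Rightarrow> 'a::comm_ring_1" where
  "der_coeff k b = (case k of Inl j \<Rightarrow> of_nat (fst b j)
     | Inr t \<Rightarrow> (if t \<in> snd b then (-1) ^ card {s \<in> snd b. s < t} else 0))"

definition der_mono :: "der \<Rightarrow> mono \<Rightarrow> mono" where
  "der_mono k b = (case k of Inl j \<Rightarrow> ((fst b)(j := fst b j - 1), snd b)
     | Inr t \<Rightarrow> (fst b, snd b - {t}))"

lemma sum_eq_single:
  assumes "finite A" "a \<in> A" "\<And>x. x \<in> A \<Longrightarrow> x \<noteq> a \<Longrightarrow> g x = 0"
  shows "sum g A = g a"
  using sum.mono_neutral_right[of A "{a}" g] assms by auto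

lemma finite_funs_below:
  assumes "finite {i. f i \<noteq> (0::nat)}"
  shows "finite {\<beta>. \<forall>i. \<beta> i \<le> f i}"
proof -
  let ?A = "{i. f i \<noteq> 0}"
  have "finite {\<beta>. \<forall>x. (x \<in> ?A \<longrightarrow> \<beta> x \<in> {0..Max (f ` ?A)}) \<and> (x \<notin> ?A \<longrightarrow> \<beta> x = 0)}"
    using assms by (intro finite_set_of_finite_funs) auto
  moreover have M: "\<forall>x. f x \<noteq> 0 \<longrightarrow> f x \<le> Max (f ` ?A)" using assms by auto
  have "{\<beta>. \<forall>i. \<beta> i \<le> f i} \<subseteq> {\<beta>. \<forall>x. (x \<in> ?A \<longrightarrow> \<beta> x \<in> {0..Max (f ` ?A)}) \<and> (x \<notin> ?A \<longrightarrow> \<beta> x = 0)}"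
    using M by (auto intro: order_trans) (metis le_zero_eq)
  ultimately show ?thesis by (rule finite_subset[rotated])
qed

lemma valid_mono_finite_exps: "valid_mono m n c \<Longrightarrow> finite {i. fst c i \<noteq> 0}"
  unfolding valid_mono_def by (rule finite_subset[of _ "{1..m}"]) auto

lemma valid_mono_finite_odd: "valid_mono m n c \<Longrightarrow> finite (snd c)"
  unfolding valid_mono_def by (auto intro: finite_subset)

lemma rmul_mono_ind:
  assumes va: "valid_mono m n a" and vb: "valid_mono m n b"
  shows "rmul (mono_ind a) (mono_ind b) c = (if c = mono_add a b then mono_sign a b else (0::'a::comm_ring_1))"
proof (cases "c = mono_add a b \<and> snd a \<inter> snd b = {}")
  case True
  then have c: "c = mono_add a b" and d: "snd a \<inter> snd b = {}" by auto
  have fs: "finite {i. fst c i \<noteq> 0}"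
    using valid_mono_finite_exps[OF va] valid_mono_finite_exps[OF vb] c
    by (auto simp: mono_add_def intro: finite_subset[of _ "{i. fst a i \<noteq> 0} \<union> {i. fst b i \<noteq> 0}"])
  have fin: "finite (snd c)" using valid_mono_finite_odd[OF va] valid_mono_finite_odd[OF vb] c by (simp add: mono_add_def)
  have in1: "fst a \<in> {\<beta>. \<forall>i. \<beta> i \<le> fst c i}" using c by (simp add: mono_add_def)
  have in2: "snd a \<in> Pow (snd c)" using c by (simp add: mono_add_def)
  have eqb: "(\<lambda>i. fst c i - fst a i) = fst b" using c by (simp add: mono_add_def)
  have eqs: "snd c - snd a = snd b" using c d by (auto simp: mono_add_def)
  have "rmul (mono_ind a) (mono_ind b) c = (\<Sum>T\<in>Pow (snd c). ysgn T (snd c - T) * mono_ind a (fst a, T) * mono_ind b (\<lambda>i. fst c i - fst a i, snd c - T))"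
    unfolding rmul_def
    by (rule sum_eq_single[OF finite_funs_below[OF fs] in1]) (auto simp: mono_ind_def prod_eq_iff intro!: sum.neutral)
  also have "\<dots> = ysgn (snd a) (snd c - snd a) * mono_ind a (fst a, snd a) * mono_ind b (\<lambda>i. fst c i - fst a i, snd c - snd a)"
    by (rule sum_eq_single[OF _ in2]) (auto simp: mono_ind_def fin prod_eq_iff)
  also have "\<dots> = mono_sign a b" using eqb eqs d by (simp add: mono_ind_def mono_sign_def)
  finally show ?thesis using c by simp
next
  case False
  have "rmul (mono_ind a) (mono_ind b) c = (0::'a)"
    unfolding rmul_def
  proof (rule sum.neutral, rule ballI)
    fix \<beta> assume b: "\<beta> \<in> {\<beta>. \<forall>i. \<beta> i \<le> fst c i}"
    show "(\<Sum>T\<in>Pow (snd c). ysgn T (snd c - T) * mono_ind a (\<beta>, T) * mono_ind b (\<lambda>i. fst c i - \<beta> i, snd c - T)) = (0::'a)"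
    proof (rule sum.neutral, rule ballI)
      fix T assume T: "T \<in> Pow (snd c)"
      show "ysgn T (snd c - T) * mono_ind a (\<beta>, T) * mono_ind b (\<lambda>i. fst c i - \<beta> i, snd c - T) = (0::'a)"
      proof (cases "(\<beta>, T) = a \<and> (\<lambda>i. fst c i - \<beta> i, snd c - T) = b")
        case True
        then have "c = mono_add a b \<and> snd a \<inter> snd b = {}" using b T
          by (cases c) (auto simp: mono_add_def fun_eq_iff)
        then show ?thesis using False by blast
      next
        case False then show ?thesis by (auto simp: mono_ind_def)
      qed
    qed
  qed
  then show ?thesis using False by (auto simp: mono_sign_def)
qed

lemma pd_mono_ind: "pd j (mono_ind b :: 'a::comm_ring_1 rel) = (\<lambda>x. of_nat (fst b j) * mono_ind ((fst b)(j := fst b j - 1), snd b) x)"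
proof
  fix x :: mono
  obtain bf bs where b: "b = (bf, bs)" by (cases b)
  obtain xf xs where x: "x = (xf, xs)" by (cases x)
  show "pd j (mono_ind b :: 'a rel) x = of_nat (fst b j) * mono_ind ((fst b)(j := fst b j - 1), snd b) x"
  proof (cases "(xf(j := xf j + 1), xs) = b")
    case True
    then have 1: "bf = xf(j := xf j + 1)" "bs = xs" using b by auto
    then have 2: "bf(j := bf j - 1) = xf" by (simp add: fun_eq_iff)
    have "pd j (mono_ind b) x = of_nat (xf j + 1)" using True x by (simp add: pd_def mono_ind_def)
    moreover have "mono_ind ((fst b)(j := fst b j - 1), snd b) x = 1" using 1 2 b x by (simp add: mono_ind_def)
    moreover have "fst b j = xf j + 1" using 1 b by simp
    ultimately show ?thesis by (metis mult.right_neutral)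
  next
    case False
    have l: "pd j (mono_ind b) x = 0" using False x by (simp add: pd_def mono_ind_def)
    have "fst b j = 0 \<or> x \<noteq> ((fst b)(j := fst b j - 1), snd b)"
    proof (rule ccontr)
      assume "\<not> ?thesis"
      then have h: "bf j \<noteq> 0" "xf = bf(j := bf j - 1)" "xs = bs" using x b by auto
      then have "xf(j := xf j + 1) = bf" by (simp add: fun_eq_iff)
      then show False using False b h by simp
    qed
    then show ?thesis using l by (auto simp: mono_ind_def)
  qed
qed

lemma Dd_mono_ind: "Dd t (mono_ind b :: 'a::comm_ring_1 rel) = (\<lambda>x. (if t \<in> snd b then (-1) ^ card {s \<in> snd b. s < t} else 0) * mono_ind (fst b, snd b - {t}) x)"
proof
  fix x :: mono
  obtain bf bs where b: "b = (bf, bs)" by (cases b)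
  obtain xf xs where x: "x = (xf, xs)" by (cases x)
  show "Dd t (mono_ind b :: 'a rel) x = (if t \<in> snd b then (-1) ^ card {s \<in> snd b. s < t} else 0) * mono_ind (fst b, snd b - {t}) x"
  proof (cases "t \<notin> xs \<and> (xf, insert t xs) = b")
    case True
    then have 1: "bf = xf" "bs = insert t xs" "t \<notin> xs" using b by auto
    have 2: "{s \<in> insert t xs. s < t} = {s \<in> xs. s < t}" by auto
    have l: "Dd t (mono_ind b) x = ((-1) ^ card {s \<in> xs. s < t} :: 'a)" using True x by (simp add: Dd_def mono_ind_def)
    have r: "mono_ind (fst b, snd b - {t}) x = (1::'a)" using 1 b x by (simp add: mono_ind_def)
    have c: "(if t \<in> snd b then (-1) ^ card {s \<in> snd b. s < t} else 0) = ((-1) ^ card {s \<in> xs. s < t} :: 'a)"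
      using 1 2 b by simp
    show ?thesis unfolding c l r by simp
  next
    case False
    have l: "Dd t (mono_ind b) x = 0" using False x by (auto simp add: Dd_def mono_ind_def)
    have "t \<notin> snd b \<or> x \<noteq> (fst b, snd b - {t})"
    proof (rule ccontr)
      assume "\<not> ?thesis"
      then have h: "t \<in> bs" "xf = bf" "xs = bs - {t}" using x b by auto
      then have "t \<notin> xs \<and> (xf, insert t xs) = b" using b by auto
      then show False using False by simp
    qed
    then show ?thesis using l by (auto simp: mono_ind_def)
  qed
qed

lemma der_op_mono_ind: "der_op k (mono_ind b :: 'a::comm_ring_1 rel) = (\<lambda>x. der_coeff k b * mono_ind (der_mono k b) x)"
  by (cases k) (simp_all add: der_op_def der_coeff_def der_mono_def pd_mono_ind Dd_mono_ind)

lemma valid_der_mono: "valid_mono m n b \<Longrightarrow> valid_mono m n (der_mono k b)"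
  by (cases k) (auto simp: valid_mono_def der_mono_def)

lemma rmul_zero_right: "rmul p (\<lambda>_. 0) = (\<lambda>_. 0)"
  by (simp add: rmul_def fun_eq_iff)

lemma rmul_zero_left: "rmul (\<lambda>_. 0) q = (\<lambda>_. 0)"
  by (simp add: rmul_def fun_eq_iff)

lemma rmul_scale_right: "rmul p (\<lambda>x. s * q x) = (\<lambda>x. s * rmul p q x)"
  by (simp add: rmul_def fun_eq_iff sum_distrib_left mult_ac)

lemma pd_zero: "pd j (\<lambda>_. 0) = (\<lambda>_. 0)" by (simp add: pd_def fun_eq_iff)

lemma Dd_zero: "Dd j (\<lambda>_. 0) = (\<lambda>_. 0)" by (simp add: Dd_def fun_eq_iff)

section \<open>Degrees of monomials\<close>

definition mono_diff :: "mono \<Rightarrow> mono \<Rightarrow> mono" where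
  "mono_diff a b = ((\<lambda>i. fst a i - fst b i), snd a - snd b)"

definition mono_le :: "mono \<Rightarrow> mono \<Rightarrow> bool" where
  "mono_le a b \<longleftrightarrow> (\<forall>i. fst a i \<le> fst b i) \<and> snd a \<subseteq> snd b"

definition var_mono :: "der \<Rightarrow> mono" where
  "var_mono k = (case k of Inl j \<Rightarrow> xmono j | Inr t \<Rightarrow> ymono t)"

lemma valid_mono_add: "valid_mono m n a \<Longrightarrow> valid_mono m n b \<Longrightarrow> valid_mono m n (mono_add a b)"
  by (auto simp: valid_mono_def mono_add_def)

lemma mono_deg_add:
  assumes "valid_mono m n a" "valid_mono m n b" "snd a \<inter> snd b = {}"
  shows "mono_deg m (mono_add a b) = mono_deg m a + mono_deg m b"
proof -
  have "card (snd a \<union> snd b) = card (snd a) + card (snd b)"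
    using assms valid_mono_finite_odd by (intro card_Un_disjoint) auto
  then show ?thesis by (simp add: mono_deg_def mono_add_def sum.distrib)
qed

lemma mono_add_commute: "mono_add a b = mono_add b a"
  by (simp add: mono_add_def add.commute Un_commute)

lemma mono_add_one_left: "mono_add mono_one x = x" by (cases x) (simp add: mono_add_def mono_one_def)

lemma mono_add_one_right: "mono_add x mono_one = x" by (cases x) (simp add: mono_add_def mono_one_def)

lemma mono_sign_nonzero_disjoint: "mono_sign a b \<noteq> 0 \<Longrightarrow> snd a \<inter> snd b = {}"
  by (auto simp: mono_sign_def split: if_splits)

lemma ysgn_nonzero: "ysgn T U \<noteq> (0::'a::field)"
  by (simp add: ysgn_def)

lemma mono_sign_nonzero: "snd a \<inter> snd b = {} \<Longrightarrow> mono_sign a b \<noteq> (0::'a::field)"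
  by (simp add: mono_sign_def ysgn_nonzero)

lemma mono_sign_one_left: "mono_sign mono_one x = 1" by (simp add: mono_sign_def mono_one_def ysgn_def)

lemma mono_sign_one_right: "mono_sign x mono_one = 1" by (simp add: mono_sign_def mono_one_def ysgn_def)

lemma valid_mono_le: "mono_le a b \<Longrightarrow> valid_mono m n b \<Longrightarrow> valid_mono m n a"
  unfolding mono_le_def valid_mono_def by (metis le_zero_eq subset_trans)

lemma mono_le_trans: "mono_le a b \<Longrightarrow> mono_le b c \<Longrightarrow> mono_le a c"
  by (auto simp: mono_le_def intro: order_trans)

lemma valid_mono_diff: "valid_mono m n b \<Longrightarrow> valid_mono m n (mono_diff b a)"
  by (auto simp: valid_mono_def mono_diff_def)

lemma mono_diff_le: "mono_le (mono_diff h a) h"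
  by (auto simp: mono_le_def mono_diff_def)

lemma mono_add_diff: "mono_le a b \<Longrightarrow> mono_add a (mono_diff b a) = b"
  by (cases b) (auto simp: mono_le_def mono_add_def mono_diff_def fun_eq_iff)

lemma disjoint_mono_diff: "snd a \<inter> snd (mono_diff b a) = {}"
  by (auto simp: mono_diff_def)

lemma mono_deg_diff:
  assumes "mono_le a b" "valid_mono m n b"
  shows "mono_deg m (mono_diff b a) + mono_deg m a = mono_deg m b"
proof -
  have "mono_deg m (mono_add a (mono_diff b a)) = mono_deg m a + mono_deg m (mono_diff b a)"
    by (rule mono_deg_add[OF valid_mono_le[OF assms] valid_mono_diff[OF assms(2)] disjoint_mono_diff])
  then show ?thesis using mono_add_diff[OF assms(1)] by simp
qed

lemma mono_le_add:
  assumes "mono_le u1 h" "mono_le u2 (mono_diff h u1)"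
  shows "mono_le (mono_add u1 u2) h"
proof -
  have "\<And>i. fst u1 i + fst u2 i \<le> fst h i"
  proof -
    fix i
    have "fst u1 i \<le> fst h i" "fst u2 i \<le> fst h i - fst u1 i"
      using assms by (auto simp: mono_le_def mono_diff_def)
    then show "fst u1 i + fst u2 i \<le> fst h i" by linarith
  qed
  moreover have "snd u1 \<union> snd u2 \<subseteq> snd h" using assms by (auto simp: mono_le_def mono_diff_def)
  ultimately show ?thesis by (simp add: mono_le_def mono_add_def)
qed

lemma valid_xmono: "j \<in> {1..m} \<Longrightarrow> valid_mono m n (xmono j)"
  by (auto simp: valid_mono_def xmono_def)

lemma valid_ymono: "t \<in> {1..n} \<Longrightarrow> valid_mono m n (ymono t)"
  by (auto simp: valid_mono_def ymono_def)

lemma deg_xmono: "j \<in> {1..m} \<Longrightarrow> mono_deg m (xmono j) = 1"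
  by (simp add: mono_deg_def xmono_def)

lemma deg_ymono: "mono_deg m (ymono t) = 1"
  by (simp add: mono_deg_def ymono_def)

lemma xmono_inj: "xmono i = xmono j \<longleftrightarrow> i = j"
  by (auto simp: xmono_def fun_eq_iff)

lemma ymono_inj: "ymono i = ymono j \<longleftrightarrow> i = j"
  by (auto simp: ymono_def)

lemma xmono_ymono: "xmono i \<noteq> ymono j"
  by (simp add: xmono_def ymono_def)

lemma valid_mono_one: "valid_mono m n mono_one" by (simp add: valid_mono_def mono_one_def)

lemma mono_deg_one: "mono_deg m mono_one = 0" by (simp add: mono_deg_def mono_one_def)

lemma valid_var_mono: "valid_der m n k \<Longrightarrow> valid_mono m n (var_mono k)"
  by (cases k) (auto simp: var_mono_def valid_der_def intro: valid_xmono valid_ymono)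

lemma mono_deg_var_mono: "valid_der m n k \<Longrightarrow> mono_deg m (var_mono k) = 1"
  by (cases k) (auto simp: var_mono_def valid_der_def deg_xmono deg_ymono)

lemma exists_deg1_mono_le:
  assumes "valid_mono m n h" "mono_deg m h \<ge> 1"
  shows "\<exists>u. mono_le u h \<and> valid_mono m n u \<and> mono_deg m u = 1"
proof (cases "snd h = {}")
  case False
  then obtain t where t: "t \<in> snd h" by auto
  then have "t \<in> {1..n}" using assms(1) by (auto simp: valid_mono_def)
  then show ?thesis using t
    using valid_ymono[of t n m] deg_ymono[of m t]
    by (intro exI[of _ "ymono t"]) (auto simp: mono_le_def ymono_def)
next
  case True
  then have "(\<Sum>i=1..m. fst h i) \<ge> 1" using assms(2) by (simp add: mono_deg_def)
  then have "(\<Sum>i=1..m. fst h i) \<noteq> 0" by linarith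
  then have "\<exists>i\<in>{1..m}. fst h i \<noteq> 0"
  proof (rule contrapos_np)
    assume "\<not> (\<exists>i\<in>{1..m}. fst h i \<noteq> 0)"
    then show "(\<Sum>i=1..m. fst h i) = 0" by (intro sum.neutral) auto
  qed
  then obtain i where i: "i \<in> {1..m}" "fst h i \<noteq> 0" by blast
  then show ?thesis
    using valid_xmono[of i m n] deg_xmono[of i m]
    by (intro exI[of _ "xmono i"]) (auto simp: mono_le_def xmono_def)
qed

lemma exists_deg2_mono_le_extending:
  assumes "valid_mono m n h" "mono_le u1 h" "valid_mono m n u1" "mono_deg m u1 = 1" "mono_deg m h \<ge> 2"
  shows "\<exists>f. mono_le f h \<and> valid_mono m n f \<and> mono_deg m f = 2 \<and> snd u1 \<subseteq> snd f"
proof -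
  have d: "mono_deg m (mono_diff h u1) \<ge> 1" using mono_deg_diff[OF assms(2,1)] assms(4,5) by simp
  obtain u2 where u2: "mono_le u2 (mono_diff h u1)" "valid_mono m n u2" "mono_deg m u2 = 1"
    using exists_deg1_mono_le[OF valid_mono_diff[OF assms(1)] d] by blast
  have dj: "snd u1 \<inter> snd u2 = {}" using u2(1) by (auto simp: mono_le_def mono_diff_def)
  show ?thesis
    using mono_le_add[OF assms(2) u2(1)] valid_mono_add[OF assms(3) u2(2)] mono_deg_add[OF assms(3) u2(2) dj] assms(4) u2(3)
    by (intro exI[of _ "mono_add u1 u2"]) (auto simp: mono_add_def)
qed

lemma exists_deg2_mono_le:
  assumes "valid_mono m n h" "mono_deg m h \<ge> 2"
  shows "\<exists>f. mono_le f h \<and> valid_mono m n f \<and> mono_deg m f = 2"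
proof -
  obtain u1 where "mono_le u1 h \<and> valid_mono m n u1 \<and> mono_deg m u1 = 1"
    using exists_deg1_mono_le[OF assms(1)] assms(2) by fastforce
  then show ?thesis using exists_deg2_mono_le_extending[OF assms(1)] assms(2) by blast
qed

lemma mono_deg_one_cases:
  assumes v: "valid_mono m n c" and d: "mono_deg m c = 1"
  shows "(\<exists>i\<in>{1..m}. c = xmono i) \<or> (\<exists>r\<in>{1..n}. c = ymono r)"
proof (cases "snd c = {}")
  case False
  then have "card (snd c) \<noteq> 0" using valid_mono_finite_odd[OF v] by simp
  then have c1: "card (snd c) = 1" and s0: "(\<Sum>i=1..m. fst c i) = 0"
    using d unfolding mono_deg_def by linarith+
  obtain r where r: "snd c = {r}" using c1 by (rule card_1_singletonE)
  have z: "\<forall>i\<in>{1..m}. fst c i = 0" using s0 by simp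
  have "fst c i = 0" for i
  proof (cases "i \<in> {1..m}")
    case False
    then show ?thesis using v unfolding valid_mono_def by auto
  qed (use z in blast)
  then have "c = ymono r" using r by (cases c) (simp add: ymono_def fun_eq_iff)
  moreover have "r \<in> {1..n}" using r v by (simp add: valid_mono_def)
  ultimately show ?thesis by blast
next
  case True
  then have "(\<Sum>i=1..m. fst c i) = Suc 0" using d by (simp add: mono_deg_def)
  then obtain i where i: "i \<in> {1..m}" "fst c i = 1" and rest: "\<forall>l\<in>{1..m}. i \<noteq> l \<longrightarrow> fst c l = 0"
    by (auto simp: sum_eq_Suc0_iff)
  have "fst c l = (if l = i then 1 else 0)" for l
  proof (cases "l \<in> {1..m}")
    case False
    then show ?thesis using v i(1) unfolding valid_mono_def by auto
  qed (use i rest in auto)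
  then have "c = xmono i" using True by (cases c) (simp add: xmono_def fun_eq_iff)
  then show ?thesis using i by blast
qed

lemma mono_deg_zero:
  assumes v: "valid_mono m n c" and d: "mono_deg m c = 0"
  shows "c = mono_one"
proof -
  have s: "snd c = {}" using d valid_mono_finite_odd[OF v] by (simp add: mono_deg_def)
  have A: "\<forall>i\<in>{1..m}. fst c i = 0" using d by (simp add: mono_deg_def)
  have B: "\<forall>i. i \<notin> {1..m} \<longrightarrow> fst c i = 0" using v by (auto simp: valid_mono_def)
  have "fst c = (\<lambda>_. 0)"
  proof
    fix x show "fst c x = 0" using A B by (cases "x \<in> {1..m}") auto
  qed
  then show ?thesis using s by (cases c) (simp add: mono_one_def)
qed

lemma mono_deg_der_mono:
  assumes "valid_mono m n c" "valid_der m n k" "der_coeff k c \<noteq> (0::'a::comm_ring_1)"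
  shows "mono_deg m (der_mono k c) + 1 = mono_deg m c"
proof (cases k)
  case (Inl j)
  then have j: "j \<in> {1..m}" using assms by (simp add: valid_der_def)
  have cj: "fst c j \<noteq> 0" using assms(3) Inl by (cases "fst c j = 0") (auto simp: der_coeff_def)
  have "(\<Sum>i=1..m. ((fst c)(j := fst c j - 1)) i) = (fst c j - 1) + (\<Sum>i\<in>{1..m} - {j}. fst c i)"
    using j by (simp add: sum.remove)
  moreover have "(\<Sum>i=1..m. fst c i) = fst c j + (\<Sum>i\<in>{1..m} - {j}. fst c i)"
    using j by (simp add: sum.remove)
  ultimately show ?thesis using cj Inl by (simp add: mono_deg_def der_mono_def)
next
  case (Inr t)
  then have t: "t \<in> snd c" using assms(3) by (auto simp: der_coeff_def split: if_splits)
  have "card (snd c) > 0" using t valid_mono_finite_odd[OF assms(1)] by (auto simp: card_gt_0_iff)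
  then have "card (snd c - {t}) + 1 = card (snd c)"
    using t valid_mono_finite_odd[OF assms(1)] by (simp add: card_Diff_singleton)
  then show ?thesis using Inr by (simp add: mono_deg_def der_mono_def)
qed

lemma mono_deg_bracket_term:
  assumes c: "valid_mono m n c" and c': "valid_mono m n c'" and k: "valid_der m n k"
    and nz: "der_coeff k c' * mono_sign c (der_mono k c') \<noteq> (0::'a::comm_ring_1)"
  shows "valid_mono m n (mono_add c (der_mono k c')) \<and>
    mono_deg m (mono_add c (der_mono k c')) + 1 = mono_deg m c + mono_deg m c'"
proof -
  have e: "der_coeff k c' \<noteq> (0::'a)" and s: "mono_sign c (der_mono k c') \<noteq> (0::'a)"
    using nz by auto
  have d: "snd c \<inter> snd (der_mono k c') = {}" by (rule mono_sign_nonzero_disjoint[OF s])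
  have v: "valid_mono m n (der_mono k c')" by (rule valid_der_mono[OF c'])
  show ?thesis using mono_deg_der_mono[OF c' k e] mono_deg_add[OF c v d] valid_mono_add[OF c v] by simp
qed

lemma der_coeff_mono_one: "der_coeff k mono_one = 0"
  by (cases k) (simp_all add: der_coeff_def mono_one_def)

lemma der_coeff_var_mono: "der_coeff k (var_mono k) = 1"
  by (cases k) (simp_all add: der_coeff_def var_mono_def xmono_def ymono_def Collect_conv_if)

lemma der_mono_var_mono: "der_mono k (var_mono k) = mono_one"
  by (cases k) (simp_all add: der_mono_def var_mono_def xmono_def ymono_def mono_one_def fun_eq_iff)

lemmas der_var_mono = der_coeff_var_mono der_mono_var_mono

lemma der_mono_Inl_add_xmono: "der_mono (Inl j) (mono_add (xmono j) a) = a"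
  by (cases a) (auto simp: der_mono_def mono_add_def xmono_def fun_eq_iff)

lemma der_coeff_Inl_add_xmono: "der_coeff (Inl j) (mono_add (xmono j) a) = (of_nat (fst a j + 1) :: 'a::comm_ring_1)"
  by (simp add: der_coeff_def mono_add_def xmono_def)

lemma der_mono_Inr_add_ymono: "t \<notin> snd a \<Longrightarrow> der_mono (Inr t) (mono_add (ymono t) a) = a"
  by (cases a) (auto simp: der_mono_def mono_add_def ymono_def)

lemma der_coeff_Inr_add_ymono: "der_coeff (Inr t) (mono_add (ymono t) a) \<noteq> (0 :: 'a::field)"
  by (simp add: der_coeff_def mono_add_def ymono_def)

lemma der_coeff_deg1_nonzero:
  assumes v: "valid_mono m n c" and d: "mono_deg m c = 1" and e: "der_coeff k c \<noteq> (0::'a::comm_ring_1)"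
  shows "c = var_mono k"
proof -
  consider (x) i where "c = xmono i" | (y) r where "c = ymono r" using mono_deg_one_cases[OF v d] by blast
  then show ?thesis
  proof cases
    case x
    show ?thesis
    proof (cases k)
      case (Inl j)
      then have "i = j" using e x by (cases "i = j") (auto simp: der_coeff_def xmono_def)
      then show ?thesis using x Inl by (simp add: var_mono_def)
    next
      case (Inr t)
      then show ?thesis using e x by (simp add: der_coeff_def xmono_def)
    qed
  next
    case y
    show ?thesis
    proof (cases k)
      case (Inl j)
      then show ?thesis using e y by (simp add: der_coeff_def ymono_def)
    next
      case (Inr t)
      then have "r = t" using e y by (cases "r = t") (auto simp: der_coeff_def ymono_def)
      then show ?thesis using y Inr by (simp add: var_mono_def)
    qed
  qed
qed

definition shift_coeff :: "der \<Rightarrow> mono \<Rightarrow> 'a::comm_ring_1" where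
  "shift_coeff k v = (case k of Inl i \<Rightarrow> of_nat (fst v i + 1) | Inr t \<Rightarrow> (-1) ^ card {s \<in> snd v. s < t})"

definition shift_cond :: "der \<Rightarrow> mono \<Rightarrow> bool" where
  "shift_cond k v = (case k of Inl i \<Rightarrow> True | Inr t \<Rightarrow> t \<notin> snd v)"

lemma der_coeff_shift_Inl:
  "der_coeff (Inl i) f * (if der_mono (Inl i) f = v then x else 0) =
   (if f = mono_add (xmono i) v then of_nat (fst v i + 1) * x else (0::'a::comm_ring_1))"
proof (cases "fst f i \<noteq> 0 \<and> der_mono (Inl i) f = v")
  case True
  then have fi: "fst f i \<noteq> 0" and ev: "((fst f)(i := fst f i - 1), snd f) = v"
    by (auto simp: der_mono_def)
  have "fst f l = fst (xmono i) l + fst v l" for l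
    using fi fun_cong[OF arg_cong[where f=fst, OF ev], of l] by (cases "l = i") (auto simp: xmono_def)
  moreover have "snd f = snd (xmono i) \<union> snd v" using ev by (auto simp: xmono_def)
  ultimately have "f = mono_add (xmono i) v" by (cases f) (simp add: mono_add_def fun_eq_iff)
  then show ?thesis using True by (simp add: der_coeff_def mono_add_def xmono_def)
next
  case False
  have "f \<noteq> mono_add (xmono i) v"
    using False der_mono_Inl_add_xmono[of i v] by (auto simp: mono_add_def xmono_def)
  then show ?thesis using False by (auto simp: der_coeff_def)
qed

lemma der_coeff_shift_Inr:
  "der_coeff (Inr t) f * (if der_mono (Inr t) f = v then x else 0) =
   (if f = mono_add (ymono t) v \<and> t \<notin> snd v then (-1) ^ card {s \<in> snd v. s < t} * x else (0::'a::comm_ring_1))"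
proof (cases "t \<in> snd f \<and> der_mono (Inr t) f = v")
  case True
  then have ti: "t \<in> snd f" and ev: "(fst f, snd f - {t}) = v" by (auto simp: der_mono_def)
  have "f = mono_add (ymono t) v" using ti ev by (cases f) (auto simp: mono_add_def ymono_def)
  moreover have "t \<notin> snd v" using ev by auto
  moreover have "{s \<in> snd f. s < t} = {s \<in> snd v. s < t}" using ev by auto
  ultimately show ?thesis using True by (simp add: der_coeff_def)
next
  case False
  have "\<not> (f = mono_add (ymono t) v \<and> t \<notin> snd v)"
  proof
    assume f: "f = mono_add (ymono t) v \<and> t \<notin> snd v"
    then have "t \<in> snd f" by (simp add: mono_add_def ymono_def)
    moreover have "der_mono (Inr t) f = v" using f der_mono_Inr_add_ymono by simp
    ultimately show False using False by simp
  qed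
  then show ?thesis using False by (auto simp: der_coeff_def)
qed

lemma der_coeff_shift:
  "der_coeff k f * (if der_mono k f = v then x else 0) =
   (if f = mono_add (var_mono k) v \<and> shift_cond k v then shift_coeff k v * x else (0::'a::comm_ring_1))"
  by (cases k) (simp_all add: der_coeff_shift_Inl der_coeff_shift_Inr var_mono_def shift_cond_def shift_coeff_def)

section \<open>Brackets of basis vector fields\<close>

lemma act_zero_right: "act m n E (\<lambda>_. 0) = (\<lambda>_. 0)"
  by (simp add: act_def pd_zero Dd_zero rmul_zero_right)

lemma act_zero_left: "act m n (\<lambda>_ _. 0) h = (\<lambda>_. 0)"
  by (simp add: act_def rmul_zero_left)

lemma wbasis_apply: "wbasis c k k' = (if k' = k then mono_ind c else (\<lambda>_. 0))"
  by (auto simp: wbasis_def mono_ind_def fun_eq_iff)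

lemma act_wbasis:
  assumes "valid_der m n k"
  shows "act m n (wbasis c k) (h::'a::comm_ring_1 rel) = (\<lambda>x. rmul (mono_ind c) (der_op k h) x)"
proof (cases k)
  case (Inl j0)
  then have j0: "j0 \<in> {1..m}" using assms by (simp add: valid_der_def)
  show ?thesis
  proof
    fix x
    have "(\<Sum>j=1..m. rmul (wbasis c k (Inl j)) (pd j h) x) = rmul (wbasis c k (Inl j0)) (pd j0 h) x"
      by (rule sum_eq_single[OF _ j0]) (auto simp: wbasis_apply Inl rmul_zero_left)
    moreover have "(\<Sum>t=1..n. rmul (wbasis c k (Inr t)) (Dd t h) x) = 0"
      by (rule sum.neutral) (auto simp: wbasis_apply Inl rmul_zero_left)
    ultimately show "act m n (wbasis c k) h x = rmul (mono_ind c) (der_op k h) x"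
      by (simp add: act_def Inl wbasis_apply der_op_def)
  qed
next
  case (Inr t0)
  then have t0: "t0 \<in> {1..n}" using assms by (simp add: valid_der_def)
  show ?thesis
  proof
    fix x
    have "(\<Sum>t=1..n. rmul (wbasis c k (Inr t)) (Dd t h) x) = rmul (wbasis c k (Inr t0)) (Dd t0 h) x"
      by (rule sum_eq_single[OF _ t0]) (auto simp: wbasis_apply Inr rmul_zero_left)
    moreover have "(\<Sum>j=1..m. rmul (wbasis c k (Inl j)) (pd j h) x) = 0"
      by (rule sum.neutral) (auto simp: wbasis_apply Inr rmul_zero_left)
    ultimately show "act m n (wbasis c k) h x = rmul (mono_ind c) (der_op k h) x"
      by (simp add: act_def Inr wbasis_apply der_op_def)
  qed
qed

lemma act_wbasis_wbasis:
  assumes "valid_der m n k" "valid_mono m n c" "valid_mono m n c'"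
  shows "act m n (wbasis c k) (wbasis c' k' k'') c'' = (
    (if k'' = k' then der_coeff k c' * mono_sign c (der_mono k c') * mono_ind (mono_add c (der_mono k c')) c'' else 0) :: 'a::comm_ring_1)"
proof (cases "k'' = k'")
  case True
  have "act m n (wbasis c k) (wbasis c' k' k'') c'' = rmul (mono_ind c) (der_op k (mono_ind c')) c''"
    using True by (simp add: wbasis_apply act_wbasis[OF assms(1)])
  also have "\<dots> = der_coeff k c' * rmul (mono_ind c) (mono_ind (der_mono k c')) c''"
    by (simp add: der_op_mono_ind rmul_scale_right)
  also have "\<dots> = (der_coeff k c' * mono_sign c (der_mono k c') * mono_ind (mono_add c (der_mono k c')) c'' :: 'a)"
    unfolding rmul_mono_ind[OF assms(2) valid_der_mono[OF assms(3), where k=k], where c=c''] by (simp add: mono_ind_def)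
  finally show ?thesis using True by simp
qed (simp add: wbasis_apply act_zero_right)

lemma proj_wbasis: "proj p (wbasis c k) = (if par k c = p then wbasis c k else (\<lambda>_ _. 0))"
  by (auto simp: proj_def wbasis_def fun_eq_iff)

lemma hbr_zero_left: "hbr m n p q (\<lambda>_ _. 0) F = (\<lambda>_ _. 0)"
  by (simp add: hbr_def act_zero_left act_zero_right)

lemma hbr_zero_right: "hbr m n p q E (\<lambda>_ _. 0) = (\<lambda>_ _. 0)"
  by (simp add: hbr_def act_zero_left act_zero_right)

lemma par_cases: "par k c = 0 \<or> par k c = 1"
  unfolding par_def by presburger

lemma par_mono_one: "par (Inl i) mono_one = 0" "par (Inr t) mono_one = 1"
  by (simp_all add: par_def mono_one_def)

lemma wbr_wbasis_hbr: "wbr m n (wbasis c k) (wbasis c' k') = (hbr m n (par k c) (par k' c') (wbasis c k) (wbasis c' k') :: 'a::comm_ring_1 wel)"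
proof -
  have "par k c = 0 \<or> par k c = 1" "par k' c' = 0 \<or> par k' c' = 1" by (rule par_cases)+
  then show ?thesis
    by (elim disjE) (simp_all add: wbr_def proj_wbasis hbr_zero_left hbr_zero_right fun_eq_iff)
qed

lemma wbr_wbasis:
  assumes "valid_der m n k" "valid_der m n k'" "valid_mono m n c" "valid_mono m n c'"
  shows "wbr m n (wbasis c k) (wbasis c' k') = ((\<lambda>k'' c''.
    (if k'' = k' then der_coeff k c' * mono_sign c (der_mono k c') * mono_ind (mono_add c (der_mono k c')) c'' else 0)
    - (-1) ^ (par k c * par k' c') *
    (if k'' = k then der_coeff k' c * mono_sign c' (der_mono k' c) * mono_ind (mono_add c' (der_mono k' c)) c'' else 0)) :: 'a::comm_ring_1 wel)"
  unfolding wbr_wbasis_hbr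
  by (simp add: hbr_def act_wbasis_wbasis[OF assms(1,3,4)] act_wbasis_wbasis[OF assms(2,4,3)] fun_eq_iff)

lemma wbr_wbasis_wadd:
  assumes "valid_der m n k" "valid_der m n k'" "valid_mono m n c" "valid_mono m n c'"
  shows "(wbr m n (wbasis c k) (wbasis c' k') :: 'a::comm_ring_1 wel) =
    wadd (wsmul (der_coeff k c' * mono_sign c (der_mono k c')) (wbasis (mono_add c (der_mono k c')) k'))
         (wsmul (- ((-1) ^ (par k c * par k' c') * (der_coeff k' c * mono_sign c' (der_mono k' c))))
                (wbasis (mono_add c' (der_mono k' c)) k))"
  unfolding wbr_wbasis[OF assms(1-4)]
  by (auto simp: wadd_def wsmul_def wbasis_def mono_ind_def fun_eq_iff)

lemma wbr_wbasis_der_coeff_zero: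
  assumes "valid_der m n k" "valid_der m n k'" "valid_mono m n c" "valid_mono m n c'"
    and "der_coeff k' c = (0::'a::comm_ring_1)"
  shows "(wbr m n (wbasis c k) (wbasis c' k') :: 'a wel) =
    wsmul (der_coeff k c' * mono_sign c (der_mono k c')) (wbasis (mono_add c (der_mono k c')) k')"
  unfolding wbr_wbasis[OF assms(1-4)] using assms(5)
  by (auto simp: wsmul_def wbasis_def mono_ind_def fun_eq_iff)

lemma wbr_wbasis_mono_one_right:
  assumes "valid_der m n k" "valid_der m n l" "valid_mono m n f"
  shows "(wbr m n (wbasis f k) (wbasis mono_one l) :: 'a::comm_ring_1 wel) =
     wsmul (- ((-1) ^ (par k f * par l mono_one) * der_coeff l f)) (wbasis (der_mono l f) k)"
  unfolding wbr_wbasis_wadd[OF assms(1,2,3) valid_mono_one]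
  by (simp add: der_coeff_mono_one mono_sign_one_left mono_add_one_left wadd_def wsmul_def fun_eq_iff)

lemma wbr_wbasis_mono_one_left:
  assumes "valid_der m n l" "valid_der m n k'" "valid_mono m n c"
  shows "(wbr m n (wbasis mono_one l) (wbasis c k') :: 'a::comm_ring_1 wel) =
     wsmul (der_coeff l c) (wbasis (der_mono l c) k')"
  unfolding wbr_wbasis_wadd[OF assms(1,2) valid_mono_one assms(3)]
  by (simp add: der_coeff_mono_one mono_sign_one_left mono_add_one_left wadd_def wsmul_def fun_eq_iff)

lemma wbasis_gpiece:
  assumes "valid_mono m n c" "valid_der m n k"
  shows "(wbasis c k :: 'a::comm_ring_1 wel) \<in> gpiece m n (int (mono_deg m c) - 1)"
proof -
  have "{(k', c'). (wbasis c k :: 'a wel) k' c' \<noteq> 0} = {(k, c)}" by (auto simp: wbasis_def)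
  then show ?thesis using assms by (auto simp: gpiece_def Wc_def wbasis_def)
qed

lemma gpiece_Wc: "E \<in> gpiece m n d \<Longrightarrow> E \<in> Wc m n"
  by (simp add: gpiece_def)

lemma wbr_wbasis_gpiece:
  assumes "valid_der m n k" "valid_der m n k'" "valid_mono m n c" "valid_mono m n c'"
  shows "(wbr m n (wbasis c k) (wbasis c' k') :: 'a::comm_ring_1 wel)
     \<in> gpiece m n (int (mono_deg m c) + int (mono_deg m c') - 2)"
proof -
  define C1 :: 'a where "C1 = der_coeff k c' * mono_sign c (der_mono k c')"
  define M1 where "M1 = mono_add c (der_mono k c')"
  define C2 :: 'a where "C2 = der_coeff k' c * mono_sign c' (der_mono k' c)"
  define M2 where "M2 = mono_add c' (der_mono k' c)"
  define s :: 'a where "s = (-1) ^ (par k c * par k' c')"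
  have F: "wbr m n (wbasis c k) (wbasis c' k') = (\<lambda>k'' c''.
    (if k'' = k' then C1 * mono_ind M1 c'' else 0) - s * (if k'' = k then C2 * mono_ind M2 c'' else 0))"
    unfolding wbr_wbasis[OF assms] C1_def M1_def C2_def M2_def s_def ..
  have ok1: "valid_mono m n M1 \<and> int (mono_deg m M1) = int (mono_deg m c) + int (mono_deg m c') - 2 + 1"
    if "C1 \<noteq> 0"
    using mono_deg_bracket_term[OF assms(3,4,1)] that unfolding C1_def M1_def by fastforce
  have ok2: "valid_mono m n M2 \<and> int (mono_deg m M2) = int (mono_deg m c) + int (mono_deg m c') - 2 + 1"
    if "C2 \<noteq> 0"
    using mono_deg_bracket_term[OF assms(4,3,2)] that unfolding C2_def M2_def by fastforce
  have nz: "(k'' = k' \<and> c'' = M1 \<and> C1 \<noteq> 0) \<or> (k'' = k \<and> c'' = M2 \<and> C2 \<noteq> 0)"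
    if "(wbr m n (wbasis c k) (wbasis c' k') :: 'a wel) k'' c'' \<noteq> 0" for k'' c''
    using that unfolding F by (auto simp: mono_ind_def split: if_splits)
  have fin: "finite {(k'', c''). (wbr m n (wbasis c k) (wbasis c' k') :: 'a wel) k'' c'' \<noteq> 0}"
    by (rule finite_subset[of _ "{(k', M1), (k, M2)}"]) (auto dest: nz)
  show ?thesis unfolding gpiece_def Wc_def
    using fin nz ok1 ok2 assms(1,2) by fastforce
qed

section \<open>Linear combinations of basis vector fields\<close>

definition wsum :: "'i set \<Rightarrow> ('i \<Rightarrow> 'a) \<Rightarrow> ('i \<Rightarrow> 'a::comm_ring_1 wel) \<Rightarrow> 'a wel" where
  "wsum I a B = (\<lambda>k c. \<Sum>i\<in>I. a i * B i k c)"

lemma wsum_apply: "wsum I a B k = (\<lambda>x. \<Sum>i\<in>I. a i * B i k x)"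
  by (simp add: wsum_def)

lemma wsum_empty: "wsum {} a B = wzero"
  by (simp add: wsum_def wzero_def fun_eq_iff)

lemma wsum_insert:
  "finite F \<Longrightarrow> x \<notin> F \<Longrightarrow> wsum (insert x F) a B = wadd (wsmul (a x) (B x)) (wsum F a B)"
  by (simp add: wsum_def wadd_def wsmul_def fun_eq_iff)

lemma rmul_sum_left:
  "rmul (\<lambda>x. \<Sum>i\<in>I. a i * p i x) q = (\<lambda>x. \<Sum>i\<in>I. a i * rmul (p i) q x :: 'a::comm_ring_1)"
proof
  fix c
  have "rmul (\<lambda>x. \<Sum>i\<in>I. a i * p i x) q c =
    (\<Sum>\<beta>\<in>{\<beta>. \<forall>i. \<beta> i \<le> fst c i}. \<Sum>T\<in>Pow (snd c). \<Sum>i\<in>I.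
       a i * (ysgn T (snd c - T) * p i (\<beta>, T) * q (\<lambda>i. fst c i - \<beta> i, snd c - T)))"
    by (simp add: rmul_def sum_distrib_left sum_distrib_right mult_ac)
  also have "\<dots> = (\<Sum>\<beta>\<in>{\<beta>. \<forall>i. \<beta> i \<le> fst c i}. \<Sum>i\<in>I. \<Sum>T\<in>Pow (snd c).
       a i * (ysgn T (snd c - T) * p i (\<beta>, T) * q (\<lambda>i. fst c i - \<beta> i, snd c - T)))"
    by (rule sum.cong[OF refl], rule sum.swap)
  also have "\<dots> = (\<Sum>i\<in>I. \<Sum>\<beta>\<in>{\<beta>. \<forall>i. \<beta> i \<le> fst c i}. \<Sum>T\<in>Pow (snd c).
       a i * (ysgn T (snd c - T) * p i (\<beta>, T) * q (\<lambda>i. fst c i - \<beta> i, snd c - T)))"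
    by (rule sum.swap)
  also have "\<dots> = (\<Sum>i\<in>I. a i * rmul (p i) q c)"
    by (simp add: rmul_def sum_distrib_left)
  finally show "rmul (\<lambda>x. \<Sum>i\<in>I. a i * p i x) q c = (\<Sum>i\<in>I. a i * rmul (p i) q c)" .
qed

lemma rmul_sum_right:
  "rmul p (\<lambda>x. \<Sum>i\<in>I. a i * q i x) = (\<lambda>x. \<Sum>i\<in>I. a i * rmul p (q i) x :: 'a::comm_ring_1)"
proof
  fix c
  have "rmul p (\<lambda>x. \<Sum>i\<in>I. a i * q i x) c =
    (\<Sum>\<beta>\<in>{\<beta>. \<forall>i. \<beta> i \<le> fst c i}. \<Sum>T\<in>Pow (snd c). \<Sum>i\<in>I.
       a i * (ysgn T (snd c - T) * p (\<beta>, T) * q i (\<lambda>i. fst c i - \<beta> i, snd c - T)))"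
    by (simp add: rmul_def sum_distrib_left sum_distrib_right mult_ac)
  also have "\<dots> = (\<Sum>\<beta>\<in>{\<beta>. \<forall>i. \<beta> i \<le> fst c i}. \<Sum>i\<in>I. \<Sum>T\<in>Pow (snd c).
       a i * (ysgn T (snd c - T) * p (\<beta>, T) * q i (\<lambda>i. fst c i - \<beta> i, snd c - T)))"
    by (rule sum.cong[OF refl], rule sum.swap)
  also have "\<dots> = (\<Sum>i\<in>I. \<Sum>\<beta>\<in>{\<beta>. \<forall>i. \<beta> i \<le> fst c i}. \<Sum>T\<in>Pow (snd c).
       a i * (ysgn T (snd c - T) * p (\<beta>, T) * q i (\<lambda>i. fst c i - \<beta> i, snd c - T)))"
    by (rule sum.swap)
  also have "\<dots> = (\<Sum>i\<in>I. a i * rmul p (q i) c)"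
    by (simp add: rmul_def sum_distrib_left)
  finally show "rmul p (\<lambda>x. \<Sum>i\<in>I. a i * q i x) c = (\<Sum>i\<in>I. a i * rmul p (q i) c)" .
qed

lemma pd_sum: "pd j (\<lambda>x. \<Sum>i\<in>I. a i * h i x) = (\<lambda>x. \<Sum>i\<in>I. a i * pd j (h i) x :: 'a::comm_ring_1)"
  by (simp add: pd_def fun_eq_iff sum_distrib_left mult_ac)

lemma Dd_sum: "Dd t (\<lambda>x. \<Sum>i\<in>I. a i * h i x) = (\<lambda>x. \<Sum>i\<in>I. a i * Dd t (h i) x :: 'a::comm_ring_1)"
  by (simp add: Dd_def fun_eq_iff sum_distrib_left sum_distrib_right mult_ac)

lemma act_wsum_left:
  "act m n (wsum I a B) h = (\<lambda>x. \<Sum>i\<in>I. a i * act m n (B i) h x :: 'a::comm_ring_1)"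
proof
  fix x
  show "act m n (wsum I a B) h x = (\<Sum>i\<in>I. a i * act m n (B i) h x)"
    unfolding act_def wsum_apply rmul_sum_left
    by (simp add: sum.distrib distrib_left sum_distrib_left) (rule arg_cong2[where f="(+)"]; rule sum.swap)
qed

lemma act_wsum_right:
  "act m n E (\<lambda>x. \<Sum>i\<in>I. a i * h i x) = (\<lambda>x. \<Sum>i\<in>I. a i * act m n E (h i) x :: 'a::comm_ring_1)"
proof
  fix x
  show "act m n E (\<lambda>x. \<Sum>i\<in>I. a i * h i x) x = (\<Sum>i\<in>I. a i * act m n E (h i) x)"
    unfolding act_def pd_sum Dd_sum rmul_sum_right
    by (simp add: sum.distrib distrib_left sum_distrib_left) (rule arg_cong2[where f="(+)"]; rule sum.swap)
qed

lemma proj_wsum: "proj p (wsum I a B) = wsum I a (\<lambda>i. proj p (B i))"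
  by (simp add: proj_def wsum_def fun_eq_iff)

lemma hbr_wsum_left: "hbr m n p q (wsum I a B) F = wsum I a (\<lambda>i. hbr m n p q (B i) F)"
  unfolding hbr_def wsum_apply act_wsum_left act_wsum_right
  by (simp add: wsum_def fun_eq_iff sum_subtractf sum_distrib_left right_diff_distrib mult_ac)

lemma hbr_wsum_right: "hbr m n p q F (wsum I a B) = wsum I a (\<lambda>i. hbr m n p q F (B i))"
  unfolding hbr_def wsum_apply act_wsum_left act_wsum_right
  by (simp add: wsum_def fun_eq_iff sum_subtractf sum_distrib_left right_diff_distrib mult_ac)

lemma wbr_wsum_left: "wbr m n (wsum I a B) F = wsum I a (\<lambda>i. wbr m n (B i) F)"
  unfolding wbr_def proj_wsum hbr_wsum_left by (simp add: fun_eq_iff wsum_def sum.distrib distrib_left)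

lemma wbr_wsum_right: "wbr m n F (wsum I a B) = wsum I a (\<lambda>i. wbr m n F (B i))"
  unfolding wbr_def proj_wsum hbr_wsum_right by (simp add: fun_eq_iff wsum_def sum.distrib distrib_left)

lemma wadd_wsum: "wadd a b = wsum {True, False} (\<lambda>_. 1) (\<lambda>i. if i then a else b)"
  by (simp add: wadd_def wsum_def fun_eq_iff)

lemma wsmul_wsum: "wsmul r a = wsum {()} (\<lambda>_. r) (\<lambda>_. a)"
  by (simp add: wsmul_def wsum_def fun_eq_iff)

lemma wbr_wsmul_right: "wbr m n X (wsmul r Z) = (wsmul r (wbr m n X Z) :: 'a::comm_ring_1 wel)"
  unfolding wsmul_wsum wbr_wsum_right ..

definition wsupp :: "'a::comm_ring_1 wel \<Rightarrow> (der \<times> mono) set" where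
  "wsupp E = {(k, c). E k c \<noteq> 0}"

definition wbas :: "der \<times> mono \<Rightarrow> 'a::comm_ring_1 wel" where
  "wbas x = wbasis (snd x) (fst x)"

definition wcoeff :: "'a::comm_ring_1 wel \<Rightarrow> der \<times> mono \<Rightarrow> 'a" where
  "wcoeff E x = E (fst x) (snd x)"

lemma wsum_wsupp:
  assumes "finite (wsupp E)"
  shows "E = wsum (wsupp E) (wcoeff E) wbas"
proof (intro ext)
  fix k c
  show "E k c = wsum (wsupp E) (wcoeff E) wbas k c"
  proof (cases "(k, c) \<in> wsupp E")
    case True
    have "wsum (wsupp E) (wcoeff E) wbas k c = wcoeff E (k, c) * wbas (k, c) k c"
      unfolding wsum_def
      by (rule sum_eq_single[OF assms True]) (auto simp: wbas_def wbasis_def)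
    then show ?thesis by (simp add: wbas_def wcoeff_def wbasis_def)
  next
    case False
    then show ?thesis
      unfolding wsum_def by (auto simp: wsupp_def wbas_def wbasis_def intro!: sum.neutral)
  qed
qed

lemma finite_wsupp: "E \<in> Wc m n \<Longrightarrow> finite (wsupp E)"
  by (simp add: Wc_def wsupp_def)

lemma wsupp_wsum: "wsupp (wsum I a B) \<subseteq> (\<Union>i\<in>I. wsupp (B i))"
proof
  fix x assume "x \<in> wsupp (wsum I a B)"
  then obtain k c where x: "x = (k, c)" and "(\<Sum>i\<in>I. a i * B i k c) \<noteq> 0"
    by (auto simp: wsupp_def wsum_def)
  then obtain i where "i \<in> I" "a i * B i k c \<noteq> 0" by (meson sum.neutral)
  then have "B i k c \<noteq> 0" by auto
  then show "x \<in> (\<Union>i\<in>I. wsupp (B i))" using x \<open>i \<in> I\<close> by (auto simp: wsupp_def)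
qed

lemma wsupp_valid:
  assumes "E \<in> Wc m n" "x \<in> wsupp E"
  shows "valid_der m n (fst x) \<and> valid_mono m n (snd x)"
  using assms by (auto simp: Wc_def wsupp_def)

lemma wsupp_deg:
  assumes "E \<in> gpiece m n d" "x \<in> wsupp E"
  shows "int (mono_deg m (snd x)) = d + 1"
  using assms by (auto simp: gpiece_def wsupp_def)

lemma wsum_Wc:
  assumes "finite I" "\<And>i. i \<in> I \<Longrightarrow> B i \<in> Wc m n"
  shows "wsum I a B \<in> Wc m n"
proof -
  have f: "finite (wsupp (wsum I a B))"
    using wsupp_wsum[of I a B] assms finite_wsupp by (meson finite_UN_I finite_subset)
  have "\<And>k c. wsum I a B k c \<noteq> 0 \<Longrightarrow> valid_der m n k \<and> valid_mono m n c"
  proof -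
    fix k c assume "wsum I a B k c \<noteq> 0"
    then have "(k, c) \<in> wsupp (wsum I a B)" by (simp add: wsupp_def)
    then obtain i where "i \<in> I" "B i k c \<noteq> 0" using wsupp_wsum[of I a B] by (auto simp: wsupp_def)
    then show "valid_der m n k \<and> valid_mono m n c" using assms(2) unfolding Wc_def by blast
  qed
  then show ?thesis using f by (simp add: Wc_def wsupp_def)
qed

lemma wsum_gpiece:
  assumes "finite I" "\<And>i. i \<in> I \<Longrightarrow> B i \<in> gpiece m n d"
  shows "wsum I a B \<in> gpiece m n d"
proof -
  have "wsum I a B \<in> Wc m n" using assms by (intro wsum_Wc) (auto simp: gpiece_def)
  moreover have "\<And>k c. wsum I a B k c \<noteq> 0 \<Longrightarrow> int (mono_deg m c) = d + 1"
  proof -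
    fix k c assume "wsum I a B k c \<noteq> 0"
    then have "(k, c) \<in> wsupp (wsum I a B)" by (simp add: wsupp_def)
    then obtain i where "i \<in> I" "B i k c \<noteq> 0" using wsupp_wsum[of I a B] by (auto simp: wsupp_def)
    then show "int (mono_deg m c) = d + 1" using assms(2) unfolding gpiece_def by blast
  qed
  ultimately show ?thesis by (simp add: gpiece_def)
qed

lemma Wc_wadd: "a \<in> Wc m n \<Longrightarrow> b \<in> Wc m n \<Longrightarrow> wadd a b \<in> Wc m n"
  unfolding wadd_wsum by (rule wsum_Wc) auto

lemma Wc_wsmul: "a \<in> Wc m n \<Longrightarrow> wsmul r a \<in> Wc m n"
  unfolding wsmul_wsum by (rule wsum_Wc) auto

lemma Wc_wzero: "(wzero :: 'a::comm_ring_1 wel) \<in> Wc m n"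
  unfolding wsum_empty[where a="\<lambda>_::unit. 0" and B="\<lambda>_. (\<lambda>_ _. 0)", symmetric] by (rule wsum_Wc) auto

lemma gpiece_wsmul: "a \<in> gpiece m n d \<Longrightarrow> wsmul r a \<in> gpiece m n d"
  unfolding wsmul_wsum by (rule wsum_gpiece) auto

lemma gpiece_wzero: "(wzero :: 'a::comm_ring_1 wel) \<in> gpiece m n d"
  unfolding wsum_empty[where a="\<lambda>_::unit. 0" and B="\<lambda>_. (\<lambda>_ _. 0)", symmetric] by (rule wsum_gpiece) auto

lemma wbr_expand:
  assumes "finite (wsupp X)" "finite (wsupp Y)"
  shows "wbr m n X Y = wsum (wsupp X) (wcoeff X) (\<lambda>i. wsum (wsupp Y) (wcoeff Y) (\<lambda>j. wbr m n (wbas i) (wbas j)))"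
proof -
  have "wbr m n X Y = wbr m n (wsum (wsupp X) (wcoeff X) wbas) (wsum (wsupp Y) (wcoeff Y) wbas)"
    by (rule arg_cong2[where f="wbr m n", OF wsum_wsupp[OF assms(1)] wsum_wsupp[OF assms(2)]])
  also have "\<dots> = wsum (wsupp X) (wcoeff X) (\<lambda>i. wsum (wsupp Y) (wcoeff Y) (\<lambda>j. wbr m n (wbas i) (wbas j)))"
    by (subst wbr_wsum_left) (simp add: wbr_wsum_right)
  finally show ?thesis .
qed

lemma wbr_gpiece:
  assumes X: "X \<in> gpiece m n i" and Y: "Y \<in> gpiece m n j"
  shows "(wbr m n X Y :: 'a::comm_ring_1 wel) \<in> gpiece m n (i + j)"
proof -
  have fX: "finite (wsupp X)" and fY: "finite (wsupp Y)" using X Y by (auto intro: finite_wsupp gpiece_Wc)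
  show ?thesis unfolding wbr_expand[OF fX fY]
  proof (intro wsum_gpiece[OF fX] wsum_gpiece[OF fY])
    fix x y assume x: "x \<in> wsupp X" and y: "y \<in> wsupp Y"
    have vx: "valid_der m n (fst x) \<and> valid_mono m n (snd x)" by (rule wsupp_valid[OF gpiece_Wc[OF X] x])
    have vy: "valid_der m n (fst y) \<and> valid_mono m n (snd y)" by (rule wsupp_valid[OF gpiece_Wc[OF Y] y])
    have "int (mono_deg m (snd x)) + int (mono_deg m (snd y)) - 2 = i + j"
      using wsupp_deg[OF X x] wsupp_deg[OF Y y] by simp
    then show "wbr m n (wbas x) (wbas y) \<in> gpiece m n (i + j)"
      using wbr_wbasis_gpiece[of m n "fst x" "fst y" "snd x" "snd y"] vx vy by (simp add: wbas_def)
  qed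
qed

lemma wbr_Wc:
  assumes X: "X \<in> Wc m n" and Y: "Y \<in> Wc m n"
  shows "(wbr m n X Y :: 'a::comm_ring_1 wel) \<in> Wc m n"
proof -
  have fX: "finite (wsupp X)" and fY: "finite (wsupp Y)" using X Y by (auto intro: finite_wsupp)
  show ?thesis unfolding wbr_expand[OF fX fY]
  proof (intro wsum_Wc[OF fX] wsum_Wc[OF fY])
    fix x y assume x: "x \<in> wsupp X" and y: "y \<in> wsupp Y"
    have vx: "valid_der m n (fst x) \<and> valid_mono m n (snd x)" by (rule wsupp_valid[OF X x])
    have vy: "valid_der m n (fst y) \<and> valid_mono m n (snd y)" by (rule wsupp_valid[OF Y y])
    show "wbr m n (wbas x) (wbas y) \<in> Wc m n"
      using gpiece_Wc[OF wbr_wbasis_gpiece[of m n "fst x" "fst y" "snd x" "snd y"]] vx vy by (simp add: wbas_def)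
  qed
qed

lemma wbr_wsupp_left:
  assumes "finite (wsupp Y)"
  shows "wbr m n Y Z = wsum (wsupp Y) (wcoeff Y) (\<lambda>y. wbr m n (wbas y) Z)"
proof -
  have "wbr m n Y Z = wbr m n (wsum (wsupp Y) (wcoeff Y) wbas) Z"
    by (rule arg_cong[where f="\<lambda>Y. wbr m n Y Z", OF wsum_wsupp[OF assms]])
  then show ?thesis by (simp add: wbr_wsum_left)
qed

lemma wbr_wbr_expand:
  assumes "finite (wsupp X)" "finite (wsupp Y)"
  shows "wbr m n X (wbr m n Y Z) = wsum (wsupp Y) (wcoeff Y) (\<lambda>y. wsum (wsupp X) (wcoeff X) (\<lambda>x. wbr m n (wbas x) (wbr m n (wbas y) Z)))"
  unfolding wbr_wsupp_left[OF assms(2), of m n Z] wbr_wsum_right wbr_wsupp_left[OF assms(1)] ..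

section \<open>Generation by the local part\<close>

lemma lie_gen_subset_Wc:
  assumes "A \<subseteq> Wc m n"
  shows "lie_gen m n A \<subseteq> (Wc m n :: 'a::comm_ring_1 wel set)"
proof
  fix x :: "'a wel" assume "x \<in> lie_gen m n A"
  then show "x \<in> Wc m n"
    by (induction rule: lie_gen.induct) (use assms in \<open>auto intro: Wc_wadd Wc_wsmul Wc_wzero wbr_Wc\<close>)
qed

lemma lie_gen_wsum:
  assumes "finite I" "\<And>i. i \<in> I \<Longrightarrow> B i \<in> lie_gen m n A"
  shows "wsum I a B \<in> lie_gen m n A"
  using assms
proof (induction I rule: finite_induct)
  case empty
  then show ?case by (simp add: wsum_empty gen_zero)
next
  case (insert x F)
  then show ?case by (auto simp: wsum_insert intro: gen_add gen_smul)
qed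

abbreviation local_part :: "nat \<Rightarrow> nat \<Rightarrow> 'a::comm_ring_1 wel set" where
  "local_part m n \<equiv> gpiece m n (-1) \<union> gpiece m n 0 \<union> gpiece m n 1"

lemma lie_gen_wbasis_deg_le2:
  assumes "valid_mono m n c" "valid_der m n k" "mono_deg m c \<le> 2"
  shows "(wbasis c k :: 'a::comm_ring_1 wel) \<in> lie_gen m n (local_part m n)"
proof -
  have "(wbasis c k :: 'a wel) \<in> gpiece m n (int (mono_deg m c) - 1)" by (rule wbasis_gpiece[OF assms(1,2)])
  moreover have "int (mono_deg m c) - 1 \<in> {-1, 0, 1}" using assms(3) by auto
  ultimately show ?thesis by (auto intro: gen_base)
qed

lemma exists_deg2_mono_le_odd_free:
  assumes h: "valid_mono m n h" "mono_deg m h \<ge> 3"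
  shows "\<exists>f. mono_le f h \<and> valid_mono m n f \<and> mono_deg m f = 2 \<and> t \<notin> snd f"
proof -
  define h' where "h' = mono_diff h (ymono t)"
  have dh': "mono_deg m h' \<ge> 2"
  proof (cases "t \<in> snd h")
    case True
    then have "mono_le (ymono t) h" by (auto simp: mono_le_def ymono_def)
    then show ?thesis using mono_deg_diff[of "ymono t" h m n] h deg_ymono[of m t] by (simp add: h'_def)
  next
    case False
    then have "h' = h" by (cases h) (auto simp: h'_def mono_diff_def ymono_def)
    then show ?thesis using h by simp
  qed
  have "valid_mono m n h'" unfolding h'_def by (rule valid_mono_diff[OF h(1)])
  then obtain f where f: "mono_le f h'" "valid_mono m n f" "mono_deg m f = 2"
    using exists_deg2_mono_le dh' by blast
  have "mono_le f h" using mono_le_trans[OF f(1)] by (simp add: h'_def mono_diff_le)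
  moreover have "t \<notin> snd f" using f(1) by (auto simp: mono_le_def h'_def mono_diff_def ymono_def)
  ultimately show ?thesis using f by blast
qed

lemma exists_deg2_mono_le_complement_odd:
  assumes h: "valid_mono m n h" "mono_deg m h \<ge> 2" and t: "t \<in> {1..n}"
  shows "\<exists>f. mono_le f h \<and> valid_mono m n f \<and> mono_deg m f = 2 \<and> t \<notin> snd (mono_diff h f)"
proof (cases "t \<in> snd h")
  case True
  have "mono_le (ymono t) h" using True by (auto simp: mono_le_def ymono_def)
  then obtain f where "mono_le f h" "valid_mono m n f" "mono_deg m f = 2" "snd (ymono t) \<subseteq> snd f"
    using exists_deg2_mono_le_extending[OF h(1) _ valid_ymono[OF t] deg_ymono] h by blast
  then show ?thesis by (intro exI[of _ f]) (auto simp: ymono_def mono_diff_def)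
next
  case False
  then show ?thesis using exists_deg2_mono_le[OF h] by (auto simp: mono_diff_def)
qed

lemma lie_gen_wsmul_wbasis:
  assumes "C \<noteq> 0 \<Longrightarrow> wbasis c k \<in> lie_gen m n A"
  shows "wsmul C (wbasis c k) \<in> lie_gen m n A"
proof (cases "C = 0")
  case True
  then have "wsmul C (wbasis c k) = wsmul 0 wzero" by (simp add: wsmul_def wzero_def fun_eq_iff)
  then show ?thesis by (auto intro: gen_smul gen_zero)
qed (use assms in \<open>auto intro: gen_smul\<close>)

lemma lie_gen_wbasis_Inr_step:
  assumes m: "1 \<le> m"
    and IH: "\<And>c k. valid_mono m n c \<Longrightarrow> valid_der m n k \<Longrightarrow> mono_deg m c < d \<Longrightarrow>
               (wbasis c k :: 'a::field_char_0 wel) \<in> lie_gen m n (local_part m n)"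
    and h: "valid_mono m n h" "mono_deg m h = d" "d \<ge> 3" and t: "t \<in> {1..n}"
  shows "(wbasis h (Inr t) :: 'a wel) \<in> lie_gen m n (local_part m n)"
proof -
  obtain f where f: "mono_le f h" "valid_mono m n f" "mono_deg m f = 2" "t \<notin> snd f"
    using exists_deg2_mono_le_odd_free[of m n h t] h by auto
  define g where "g = mono_add (xmono 1) (mono_diff h f)"
  have m1: "1 \<in> {1..m}" using m by simp
  have v1: "valid_der m n (Inl 1)" and vt: "valid_der m n (Inr t)"
    using m t by (auto simp: valid_der_def)
  have vg: "valid_mono m n g" unfolding g_def by (intro valid_mono_add valid_xmono[OF m1] valid_mono_diff h(1))
  have "mono_deg m g = mono_deg m (xmono 1) + mono_deg m (mono_diff h f)"
    unfolding g_def by (rule mono_deg_add[OF valid_xmono[OF m1] valid_mono_diff[OF h(1)]]) (simp add: xmono_def)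
  then have dg: "mono_deg m g < d" using deg_xmono[OF m1] mono_deg_diff[OF f(1) h(1)] f(3) h(2) by simp
  have A: "(wbasis f (Inl 1) :: 'a wel) \<in> lie_gen m n (local_part m n)"
    by (rule lie_gen_wbasis_deg_le2[OF f(2) v1]) (use f(3) in simp)
  have B: "(wbasis g (Inr t) :: 'a wel) \<in> lie_gen m n (local_part m n)"
    by (rule IH[OF vg vt dg])
  define C :: 'a where "C = der_coeff (Inl 1) g * mono_sign f (der_mono (Inl 1) g)"
  \<comment> \<open>Since \<open>D\<^sub>t\<close> kills \<open>f\<close>, the bracket has a single term, with coefficient \<open>\<plusminus>(h\<^sub>1 - f\<^sub>1 + 1)\<close>.\<close>
  have br: "(wbr m n (wbasis f (Inl 1)) (wbasis g (Inr t)) :: 'a wel) = wsmul C (wbasis h (Inr t))"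
  proof -
    have "der_coeff (Inr t) f = (0::'a)" using f(4) by (simp add: der_coeff_def)
    then have "(wbr m n (wbasis f (Inl 1)) (wbasis g (Inr t)) :: 'a wel) =
        wsmul C (wbasis (mono_add f (der_mono (Inl 1) g)) (Inr t))"
      unfolding C_def by (rule wbr_wbasis_der_coeff_zero[OF v1 vt f(2) vg])
    then show ?thesis unfolding g_def der_mono_Inl_add_xmono mono_add_diff[OF f(1)] .
  qed
  have "C \<noteq> 0"
    unfolding C_def g_def der_mono_Inl_add_xmono der_coeff_Inl_add_xmono
    using mono_sign_nonzero[OF disjoint_mono_diff, of f h] of_nat_neq_0[of "fst (mono_diff h f) 1", where 'a='a]
    by simp
  then have "(wbasis h (Inr t) :: 'a wel) = wsmul (1 / C) (wbr m n (wbasis f (Inl 1)) (wbasis g (Inr t)))"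
    unfolding br by (simp add: wsmul_def fun_eq_iff)
  then show ?thesis using A B by (auto intro: gen_smul gen_br)
qed

lemma lie_gen_wbasis_Inl_step:
  assumes n: "1 \<le> n"
    and IH: "\<And>c k. valid_mono m n c \<Longrightarrow> valid_der m n k \<Longrightarrow> mono_deg m c < d \<Longrightarrow>
               (wbasis c k :: 'a::field_char_0 wel) \<in> lie_gen m n (local_part m n)"
    and IH_D1: "\<And>c. valid_mono m n c \<Longrightarrow> mono_deg m c = d \<Longrightarrow>
               (wbasis c (Inr 1) :: 'a wel) \<in> lie_gen m n (local_part m n)"
    and h: "valid_mono m n h" "mono_deg m h = d" "d \<ge> 3" and j: "j \<in> {1..m}"
  shows "(wbasis h (Inl j) :: 'a wel) \<in> lie_gen m n (local_part m n)"
proof -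
  have n1: "1 \<in> {1..n}" using n by simp
  obtain f where f: "mono_le f h" "valid_mono m n f" "mono_deg m f = 2" "1 \<notin> snd (mono_diff h f)"
    using exists_deg2_mono_le_complement_odd[OF h(1) _ n1] h by auto
  define g where "g = mono_add (ymono 1) (mono_diff h f)"
  have vj: "valid_der m n (Inl j)" and v1: "valid_der m n (Inr 1)"
    using j n by (auto simp: valid_der_def)
  have vg: "valid_mono m n g" unfolding g_def by (intro valid_mono_add valid_ymono[OF n1] valid_mono_diff h(1))
  have "mono_deg m g = mono_deg m (ymono 1) + mono_deg m (mono_diff h f)"
    unfolding g_def by (rule mono_deg_add[OF valid_ymono[OF n1] valid_mono_diff[OF h(1)]]) (use f(4) in \<open>simp add: ymono_def\<close>)
  then have dg: "mono_deg m g = d - 1" using deg_ymono[of m 1] mono_deg_diff[OF f(1) h(1)] f(3) h(2) by simp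
  have A: "(wbasis f (Inr 1) :: 'a wel) \<in> lie_gen m n (local_part m n)"
    by (rule lie_gen_wbasis_deg_le2[OF f(2) v1]) (use f(3) in simp)
  have B: "(wbasis g (Inl j) :: 'a wel) \<in> lie_gen m n (local_part m n)"
    by (rule IH[OF vg vj]) (use dg h in simp)
  define C1 :: 'a where "C1 = der_coeff (Inr 1) g * mono_sign f (der_mono (Inr 1) g)"
  define C2 :: 'a where "C2 = (-1) ^ (par (Inr 1) f * par (Inl j) g) * (der_coeff (Inl j) f * mono_sign g (der_mono (Inl j) f))"
  define M where "M = mono_add g (der_mono (Inl j) f)"
  have em: "der_mono (Inr 1) g = mono_diff h f" unfolding g_def by (rule der_mono_Inr_add_ymono[OF f(4)])
  \<comment> \<open>The second term \<open>M D\<^sub>1\<close> of the bracket has the same degree as \<open>h\<close>; it is covered by \<open>IH_D1\<close>.\<close>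
  have br: "(wbr m n (wbasis f (Inr 1)) (wbasis g (Inl j)) :: 'a wel) =
     wadd (wsmul C1 (wbasis h (Inl j))) (wsmul (- C2) (wbasis M (Inr 1)))"
    unfolding wbr_wbasis_wadd[OF v1 vj f(2) vg] C1_def C2_def M_def em mono_add_diff[OF f(1)] by simp
  have C1: "C1 \<noteq> 0"
    unfolding C1_def em using mono_sign_nonzero[OF disjoint_mono_diff, of f h]
      der_coeff_Inr_add_ymono[of 1 "mono_diff h f", where 'a='a] by (simp add: g_def)
  have "wsmul C2 (wbasis M (Inr 1)) \<in> lie_gen m n (local_part m n)"
  proof (rule lie_gen_wsmul_wbasis)
    assume "C2 \<noteq> 0"
    then have "valid_mono m n M \<and> mono_deg m M + 1 = mono_deg m g + mono_deg m f"
      unfolding M_def by (intro mono_deg_bracket_term[OF vg f(2) vj, where 'a='a]) (simp add: C2_def)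
    then have "mono_deg m M = d" "valid_mono m n M" using dg f(3) h(3) by auto
    then show "(wbasis M (Inr 1) :: 'a wel) \<in> lie_gen m n (local_part m n)" by (rule IH_D1[rotated])
  qed
  moreover have "(wbasis h (Inl j) :: 'a wel) =
      wsmul (1 / C1) (wadd (wbr m n (wbasis f (Inr 1)) (wbasis g (Inl j))) (wsmul C2 (wbasis M (Inr 1))))"
    unfolding br using C1 by (simp add: wsmul_def wadd_def fun_eq_iff)
  ultimately show ?thesis using A B by (auto intro: gen_smul gen_br gen_add)
qed

lemma lie_gen_wbasis:
  assumes m: "1 \<le> m" and n: "1 \<le> n"
  shows "valid_mono m n c \<Longrightarrow> valid_der m n k \<Longrightarrow> (wbasis c k :: 'a::field_char_0 wel) \<in> lie_gen m n (local_part m n)"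
proof (induction "mono_deg m c" arbitrary: c k rule: less_induct)
  case less
  show ?case
  proof (cases "mono_deg m c \<le> 2")
    case True
    then show ?thesis by (rule lie_gen_wbasis_deg_le2[OF less.prems])
  next
    case False
    then have d3: "mono_deg m c \<ge> 3" by simp
    have IH: "\<And>c' k'. valid_mono m n c' \<Longrightarrow> valid_der m n k' \<Longrightarrow> mono_deg m c' < mono_deg m c \<Longrightarrow>
               (wbasis c' k' :: 'a wel) \<in> lie_gen m n (local_part m n)"
      by (rule less.hyps)
    have IH_D1: "\<And>c'. valid_mono m n c' \<Longrightarrow> mono_deg m c' = mono_deg m c \<Longrightarrow>
               (wbasis c' (Inr 1) :: 'a wel) \<in> lie_gen m n (local_part m n)"
      using lie_gen_wbasis_Inr_step[OF m IH _ _ d3] n by simp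
    show ?thesis
    proof (cases k)
      case (Inl j)
      then have j: "j \<in> {1..m}" using less.prems(2) by (simp add: valid_der_def)
      show ?thesis unfolding Inl by (rule lie_gen_wbasis_Inl_step[OF n IH IH_D1 less.prems(1) refl d3 j])
    next
      case (Inr t)
      then have t: "t \<in> {1..n}" using less.prems(2) by (simp add: valid_der_def)
      show ?thesis unfolding Inr by (rule lie_gen_wbasis_Inr_step[OF m IH less.prems(1) refl d3 t])
    qed
  qed
qed

lemma lie_gen_local_part:
  assumes m: "1 \<le> m" and n: "1 \<le> n"
  shows "lie_gen m n (local_part m n) = (Wc m n :: 'a::field_char_0 wel set)"
proof
  show "lie_gen m n (local_part m n) \<subseteq> (Wc m n :: 'a wel set)"
    by (rule lie_gen_subset_Wc) (auto intro: gpiece_Wc)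
next
  show "(Wc m n :: 'a wel set) \<subseteq> lie_gen m n (local_part m n)"
  proof
    fix E :: "'a wel" assume E: "E \<in> Wc m n"
    have f: "finite (wsupp E)" by (rule finite_wsupp[OF E])
    have "wsum (wsupp E) (wcoeff E) wbas \<in> lie_gen m n (local_part m n)"
    proof (rule lie_gen_wsum[OF f])
      fix x assume "x \<in> wsupp E"
      then have "valid_der m n (fst x) \<and> valid_mono m n (snd x)" by (rule wsupp_valid[OF E])
      then show "(wbas x :: 'a wel) \<in> lie_gen m n (local_part m n)" unfolding wbas_def by (intro lie_gen_wbasis[OF m n]) auto
    qed
    then show "E \<in> lie_gen m n (local_part m n)" by (subst wsum_wsupp[OF f])
  qed
qed

section \<open>The supertrace character\<close>

text \<open>Under \<open>g\<^sub>0 \<cong> gl(m|n)\<close>, the diagonal matrix units are \<open>x\<^sub>i \<partial>\<^sub>i\<close> and \<open>y\<^sub>s D\<^sub>s\<close>,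
  so \<open>str_char\<close> is the supertrace.\<close>

definition str_char :: "nat \<Rightarrow> nat \<Rightarrow> 'a::comm_ring_1 wel \<Rightarrow> 'a" where
  "str_char m n E = (\<Sum>i=1..m. E (Inl i) (xmono i)) - (\<Sum>s=1..n. E (Inr s) (ymono s))"

definition der_sign :: "der \<Rightarrow> 'a::comm_ring_1" where
  "der_sign k = (case k of Inl j \<Rightarrow> 1 | Inr t \<Rightarrow> -1)"

lemma str_char_wsum: "str_char m n (wsum I a B) = (\<Sum>i\<in>I. a i * str_char m n (B i))"
  by (simp add: str_char_def wsum_def sum_distrib_left right_diff_distrib sum_subtractf)
    (rule arg_cong2[where f="(-)"]; rule sum.swap)

lemma str_char_wsmul: "str_char m n (wsmul r E) = r * str_char m n E"
  by (simp add: str_char_def wsmul_def sum_distrib_left right_diff_distrib)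

lemma str_char_wadd: "str_char m n (wadd E F) = str_char m n E + str_char m n F"
  by (simp add: str_char_def wadd_def sum.distrib)

lemma str_char_wbasis:
  assumes "valid_der m n k"
  shows "str_char m n (wbasis c k :: 'a::comm_ring_1 wel) = (if c = var_mono k then der_sign k else 0)"
proof (cases k)
  case (Inl j)
  then have j: "j \<in> {1..m}" using assms by (simp add: valid_der_def)
  have single: "(\<Sum>i=1..m. (wbasis c k :: 'a wel) (Inl i) (xmono i)) = (wbasis c k :: 'a wel) (Inl j) (xmono j)"
    by (rule sum_eq_single[OF _ j]) (auto simp: wbasis_def Inl)
  have other: "(\<Sum>s=1..n. (wbasis c k :: 'a wel) (Inr s) (ymono s)) = 0"
    by (rule sum.neutral) (auto simp: wbasis_def Inl)
  show ?thesis unfolding str_char_def single other by (auto simp: wbasis_def Inl var_mono_def der_sign_def)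
next
  case (Inr t)
  then have t: "t \<in> {1..n}" using assms by (simp add: valid_der_def)
  have single: "(\<Sum>s=1..n. (wbasis c k :: 'a wel) (Inr s) (ymono s)) = (wbasis c k :: 'a wel) (Inr t) (ymono t)"
    by (rule sum_eq_single[OF _ t]) (auto simp: wbasis_def Inr)
  have other: "(\<Sum>i=1..m. (wbasis c k :: 'a wel) (Inl i) (xmono i)) = 0"
    by (rule sum.neutral) (auto simp: wbasis_def Inr)
  show ?thesis unfolding str_char_def single other by (auto simp: wbasis_def Inr var_mono_def der_sign_def)
qed

text \<open>The two sides of SI-2 for \<open>X = f k\<close> and \<open>Y = l\<close> in closed form; both vanish unless
  \<open>f\<close> is the product of the variables dual to \<open>k\<close> and \<open>l\<close>.\<close>

lemma der_coeff_swap: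
  "- ((-1) ^ (par k f * par l mono_one) * der_coeff l f) * (if der_mono l f = var_mono k then der_sign k else 0)
   = (-1) ^ par k (var_mono l) * (- ((-1) ^ (par k f * par k mono_one) * der_coeff k f)) *
      (if der_mono k f = var_mono l then 1 else (0::'a::comm_ring_1))" (is "?L = ?R")
proof -
  let ?f = "mono_add (var_mono k) (var_mono l)"
  have L: "?L = - ((-1) ^ (par k f * par l mono_one)) *
      (if f = ?f \<and> shift_cond l (var_mono k) then shift_coeff l (var_mono k) * der_sign k else 0)"
    by (simp only: minus_mult_left mult.assoc der_coeff_shift mono_add_commute[of "var_mono l"])
  have R: "?R = (-1) ^ par k (var_mono l) * (- ((-1) ^ (par k f * par k mono_one))) *
      (if f = ?f \<and> shift_cond k (var_mono l) then shift_coeff k (var_mono l) * 1 else 0)"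
    by (simp only: minus_mult_left mult.assoc der_coeff_shift)
  have card_single: "card {s. s = r \<and> s < t} = (if r < t then 1 else 0)" for r t :: nat
    by (cases "r < t") (simp_all add: Collect_conv_if)
  show ?thesis
  proof (cases "f = ?f")
    case True
    then show ?thesis unfolding L R
      by (cases k; cases l)
        (auto simp: par_mono_one mono_one_def shift_coeff_def shift_cond_def der_sign_def
          var_mono_def mono_add_def xmono_def ymono_def par_def card_single card_insert_if)
  next
    case False
    then show ?thesis unfolding L R by simp
  qed
qed

lemma finite_g0_basis: "finite (g0_basis m n)"
proof (rule finite_subset)
  show "g0_basis m n \<subseteq> (xmono ` {1..m} \<union> ymono ` {1..n}) \<times> (Inl ` {1..m} \<union> Inr ` {1..n})"
  proof
    fix x assume "x \<in> g0_basis m n"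
    then obtain c k where x: "x = (c, k)" and v: "valid_mono m n c" "valid_der m n k" "mono_deg m c = 1"
      by (auto simp: g0_basis_def)
    have "c \<in> xmono ` {1..m} \<union> ymono ` {1..n}" using mono_deg_one_cases[OF v(1,3)] by auto
    moreover have "k \<in> Inl ` {1..m} \<union> Inr ` {1..n}" using v(2) by (cases k) (auto simp: valid_der_def)
    ultimately show "x \<in> (xmono ` {1..m} \<union> ymono ` {1..n}) \<times> (Inl ` {1..m} \<union> Inr ` {1..n})"
      using x by auto
  qed
qed auto

lemma str0_eq_sum: "str0 m n A = (\<Sum>x\<in>g0_basis m n. (-1) ^ par (snd x) (fst x) * A (wbasis (fst x) (snd x)) (snd x) (fst x))"
  by (simp add: str0_def case_prod_beta)

lemma str0_wbr_wbasis:
  assumes vk: "valid_der m n k" and vl: "valid_der m n l" and vf: "valid_mono m n f"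
  shows "str0 m n (\<lambda>Z. wbr m n (wbasis f k) (wbr m n (wbasis mono_one l) Z)) =
    (-1) ^ par k (var_mono l) * (- ((-1) ^ (par k f * par k mono_one) * der_coeff k f)) *
      (if der_mono k f = var_mono l then 1 else (0::'a::comm_ring_1))"
proof -
  let ?A = "\<lambda>Z. wbr m n (wbasis f k) (wbr m n (wbasis mono_one l) Z) :: 'a wel"
  have mem: "(var_mono l, k) \<in> g0_basis m n"
    using valid_var_mono[OF vl] mono_deg_var_mono[OF vl] vk by (simp add: g0_basis_def)
  have T: "?A (wbasis c k') = wsmul (der_coeff l c) (wbr m n (wbasis f k) (wbasis (der_mono l c) k'))"
    if "valid_mono m n c" "valid_der m n k'" for c k'
    unfolding wbr_wbasis_mono_one_left[OF vl that(2) that(1)] wbr_wsmul_right ..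
  have "str0 m n ?A = (-1) ^ par k (var_mono l) * ?A (wbasis (var_mono l) k) k (var_mono l)"
    unfolding str0_eq_sum
  proof (rule trans[OF sum_eq_single[OF finite_g0_basis mem]])
    fix x assume x: "x \<in> g0_basis m n" "x \<noteq> (var_mono l, k)"
    obtain c k' where xe: "x = (c, k')" by (cases x)
    have v: "valid_mono m n c" "valid_der m n k'" "mono_deg m c = 1" using x xe by (auto simp: g0_basis_def)
    have "?A (wbasis c k') k' c = (0::'a)"
    proof (cases "c = var_mono l")
      case False
      then have "der_coeff l c = (0::'a)" using der_coeff_deg1_nonzero[OF v(1,3)] by blast
      then show ?thesis unfolding T[OF v(1,2)] by (simp add: wsmul_def)
    next
      case True
      then have ne: "k' \<noteq> k" using x xe by simp
      have e: "?A (wbasis c k') k' c = der_coeff l c * (wbr m n (wbasis f k) (wbasis (der_mono l c) k') :: 'a wel) k' c"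
        unfolding T[OF v(1,2)] by (simp add: wsmul_def)
      show ?thesis using ne
        by (subst e) (simp only: True der_var_mono wbr_wbasis_mono_one_right[OF vk v(2) vf], simp add: wsmul_def wbasis_def)
    qed
    then show "(-1) ^ par (snd x) (fst x) * ?A (wbasis (fst x) (snd x)) (snd x) (fst x) = 0"
      using xe by simp
  qed simp
  also have "\<dots> = (-1) ^ par k (var_mono l) * (- ((-1) ^ (par k f * par k mono_one) * der_coeff k f)) *
      (if der_mono k f = var_mono l then 1 else (0::'a))"
    unfolding T[OF valid_var_mono[OF vl] vk] der_var_mono wbr_wbasis_mono_one_right[OF vk vk vf]
    by (auto simp: wsmul_def wbasis_def)
  finally show ?thesis .
qed

lemma str_char_wbr_wbasis_eq_str0:
  assumes vk: "valid_der m n k" and vl: "valid_der m n l" and vf: "valid_mono m n f"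
  shows "str_char m n (wbr m n (wbasis f k) (wbasis mono_one l) :: 'a::comm_ring_1 wel) =
    str0 m n (\<lambda>Z. wbr m n (wbasis f k) (wbr m n (wbasis mono_one l) Z))"
  unfolding str0_wbr_wbasis[OF assms] wbr_wbasis_mono_one_right[OF vk vl vf] str_char_wsmul str_char_wbasis[OF vk]
  by (rule der_coeff_swap)

lemma str0_wsum: "str0 m n (\<lambda>Z. wsum I a (\<lambda>i. F i Z)) = (\<Sum>i\<in>I. a i * str0 m n (\<lambda>Z. F i Z) :: 'a::comm_ring_1)"
  unfolding str0_eq_sum
  by (simp add: wsum_def sum_distrib_left mult_ac) (rule sum.swap)

lemma str_char_wbr_eq_str0:
  assumes X: "X \<in> gpiece m n 1" and Y: "Y \<in> gpiece m n (-1)"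
  shows "str_char m n (wbr m n X Y :: 'a::comm_ring_1 wel) = str0 m n (\<lambda>Z. wbr m n X (wbr m n Y Z))"
proof -
  have fX: "finite (wsupp X)" and fY: "finite (wsupp Y)" using X Y by (auto intro: finite_wsupp gpiece_Wc)
  have eq: "str_char m n (wbr m n (wbas x) (wbas y) :: 'a wel) = str0 m n (\<lambda>Z. wbr m n (wbas x) (wbr m n (wbas y) Z))"
    if x: "x \<in> wsupp X" and y: "y \<in> wsupp Y" for x y
  proof -
    have vx: "valid_der m n (fst x) \<and> valid_mono m n (snd x)" by (rule wsupp_valid[OF gpiece_Wc[OF X] x])
    have vy: "valid_der m n (fst y) \<and> valid_mono m n (snd y)" by (rule wsupp_valid[OF gpiece_Wc[OF Y] y])
    have d0: "mono_deg m (snd y) = 0" using wsupp_deg[OF Y y] by simp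
    have "snd y = mono_one" by (rule mono_deg_zero[OF conjunct2[OF vy] d0])
    then show ?thesis unfolding wbas_def using str_char_wbr_wbasis_eq_str0[of m n "fst x" "fst y" "snd x"] vx vy by simp
  qed
  have "str_char m n (wbr m n X Y :: 'a wel) = (\<Sum>x\<in>wsupp X. wcoeff X x * (\<Sum>y\<in>wsupp Y. wcoeff Y y * str_char m n (wbr m n (wbas x) (wbas y) :: 'a wel)))"
    unfolding wbr_expand[OF fX fY] str_char_wsum ..
  also have "\<dots> = (\<Sum>y\<in>wsupp Y. \<Sum>x\<in>wsupp X. wcoeff Y y * (wcoeff X x * str_char m n (wbr m n (wbas x) (wbas y) :: 'a wel)))"
    by (simp add: sum_distrib_left mult_ac) (rule sum.swap)
  also have "\<dots> = (\<Sum>y\<in>wsupp Y. \<Sum>x\<in>wsupp X. wcoeff Y y * (wcoeff X x * str0 m n (\<lambda>Z. wbr m n (wbas x) (wbr m n (wbas y) Z))))"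
    using eq by (intro sum.cong refl) simp
  also have "\<dots> = str0 m n (\<lambda>Z. wbr m n X (wbr m n Y Z))"
    unfolding wbr_wbr_expand[OF fX fY] str0_wsum by (simp add: sum_distrib_left)
  finally show ?thesis .
qed

lemma str_char_wbr_wbasis_g0:
  assumes vk: "valid_der m n k" and vk': "valid_der m n k'"
    and vc: "valid_mono m n c" and vc': "valid_mono m n c'"
    and dc: "mono_deg m c = 1" and dc': "mono_deg m c' = 1"
  shows "str_char m n (wbr m n (wbasis c k) (wbasis c' k') :: 'a::comm_ring_1 wel) = 0"
proof -
  have t1: "der_coeff k c' * mono_sign c (der_mono k c') * (if mono_add c (der_mono k c') = var_mono k' then der_sign k' else 0)
    = (if c' = var_mono k \<and> c = var_mono k' then der_sign k' else (0::'a))"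
  proof (cases "c' = var_mono k")
    case True then show ?thesis by (simp add: der_var_mono mono_sign_one_right mono_add_one_right)
  next
    case False
    then have "der_coeff k c' = (0::'a)" using der_coeff_deg1_nonzero[OF vc' dc'] by blast
    then show ?thesis using False by simp
  qed
  have t2: "der_coeff k' c * mono_sign c' (der_mono k' c) * (if mono_add c' (der_mono k' c) = var_mono k then der_sign k else 0)
    = (if c = var_mono k' \<and> c' = var_mono k then der_sign k else (0::'a))"
  proof (cases "c = var_mono k'")
    case True then show ?thesis by (simp add: der_var_mono mono_sign_one_right mono_add_one_right)
  next
    case False
    then have "der_coeff k' c = (0::'a)" using der_coeff_deg1_nonzero[OF vc dc] by blast
    then show ?thesis using False by simp
  qed
  have "str_char m n (wbr m n (wbasis c k) (wbasis c' k') :: 'a wel) =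
     der_coeff k c' * mono_sign c (der_mono k c') * (if mono_add c (der_mono k c') = var_mono k' then der_sign k' else 0)
     - (-1) ^ (par k c * par k' c') * (der_coeff k' c * mono_sign c' (der_mono k' c) * (if mono_add c' (der_mono k' c) = var_mono k then der_sign k else 0))"
    unfolding wbr_wbasis_wadd[OF vk vk' vc vc'] str_char_wadd str_char_wsmul str_char_wbasis[OF vk] str_char_wbasis[OF vk']
    by (simp add: algebra_simps)
  also have "\<dots> = (if c' = var_mono k \<and> c = var_mono k' then der_sign k' - (-1) ^ (par k c * par k' c') * der_sign k else 0)"
    unfolding t1 t2 by auto
  also have "\<dots> = 0"
  proof (cases "c' = var_mono k \<and> c = var_mono k'")
    case True
    then have c: "c = var_mono k'" and c': "c' = var_mono k" by auto
    show ?thesis unfolding c c'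
      by (cases k; cases k') (simp_all add: der_sign_def var_mono_def par_def xmono_def ymono_def)
  qed auto
  finally show ?thesis .
qed

lemma str_char_wbr_g0:
  assumes a: "a \<in> gpiece m n 0" and b: "b \<in> gpiece m n 0"
  shows "str_char m n (wbr m n a b :: 'a::comm_ring_1 wel) = 0"
proof -
  have fa: "finite (wsupp a)" and fb: "finite (wsupp b)" using a b by (auto intro: finite_wsupp gpiece_Wc)
  have z: "str_char m n (wbr m n (wbas x) (wbas y) :: 'a wel) = 0" if x: "x \<in> wsupp a" and y: "y \<in> wsupp b" for x y
  proof -
    have vx: "valid_der m n (fst x) \<and> valid_mono m n (snd x)" by (rule wsupp_valid[OF gpiece_Wc[OF a] x])
    have vy: "valid_der m n (fst y) \<and> valid_mono m n (snd y)" by (rule wsupp_valid[OF gpiece_Wc[OF b] y])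
    have dx: "mono_deg m (snd x) = 1" using wsupp_deg[OF a x] by simp
    have dy: "mono_deg m (snd y) = 1" using wsupp_deg[OF b y] by simp
    show ?thesis unfolding wbas_def using str_char_wbr_wbasis_g0 vx vy dx dy by blast
  qed
  show ?thesis unfolding wbr_expand[OF fa fb] str_char_wsum using z by simp
qed

lemma linear_g0_wsum:
  assumes L: "linear_g0 m n \<gamma>" and I: "finite I" and W: "\<And>i. i \<in> I \<Longrightarrow> W i \<in> gpiece m n 0"
  shows "\<gamma> (wsum I a W) = (\<Sum>i\<in>I. a i * \<gamma> (W i) :: 'a::comm_ring_1)"
  using I W
proof (induction I rule: finite_induct)
  case empty
  have z: "(wzero :: 'a wel) \<in> gpiece m n 0" by (rule gpiece_wzero)
  have "wsmul 0 (wzero :: 'a wel) = wzero" by (simp add: wsmul_def wzero_def fun_eq_iff)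
  then have "\<gamma> wzero = 0 * \<gamma> wzero" using L z unfolding linear_g0_def by metis
  then show ?case by (simp add: wsum_empty)
next
  case (insert x F)
  have g1: "wsmul (a x) (W x) \<in> gpiece m n 0" using insert(4) by (auto intro: gpiece_wsmul)
  have g2: "wsum F a W \<in> gpiece m n 0" using insert by (intro wsum_gpiece) auto
  have "\<gamma> (wsum (insert x F) a W) = \<gamma> (wsmul (a x) (W x)) + \<gamma> (wsum F a W)"
    unfolding wsum_insert[OF insert(1,2)] using L g1 g2 by (simp add: linear_g0_def)
  also have "\<gamma> (wsmul (a x) (W x)) = a x * \<gamma> (W x)" using L insert(4) by (simp add: linear_g0_def)
  finally show ?case using insert by simp
qed

lemma linear_g0_str_char: "linear_g0 m n (str_char m n)"
  by (simp add: linear_g0_def str_char_wadd str_char_wsmul)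

definition agrees_on_g0_basis :: "nat \<Rightarrow> nat \<Rightarrow> ('a::comm_ring_1 wel \<Rightarrow> 'a) \<Rightarrow> bool" where
  "agrees_on_g0_basis m n \<gamma> \<longleftrightarrow> (\<forall>v k. valid_mono m n v \<and> mono_deg m v = 1 \<and> valid_der m n k \<longrightarrow>
     \<gamma> (wbasis v k) = str_char m n (wbasis v k))"

lemma linear_g0_eq_str_char:
  assumes L: "linear_g0 m n \<gamma>" and B: "agrees_on_g0_basis m n \<gamma>" and Z: "Z \<in> gpiece m n 0"
  shows "\<gamma> Z = str_char m n (Z :: 'a::comm_ring_1 wel)"
proof -
  have f: "finite (wsupp Z)" by (rule finite_wsupp[OF gpiece_Wc[OF Z]])
  have eZ: "Z = wsum (wsupp Z) (wcoeff Z) wbas" by (rule wsum_wsupp[OF f])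
  have bz: "wbas x \<in> gpiece m n 0" "\<gamma> (wbas x) = str_char m n (wbas x)" if x: "x \<in> wsupp Z" for x
  proof -
    have vx: "valid_der m n (fst x) \<and> valid_mono m n (snd x)" by (rule wsupp_valid[OF gpiece_Wc[OF Z] x])
    have dx: "mono_deg m (snd x) = 1" using wsupp_deg[OF Z x] by simp
    show "wbas x \<in> gpiece m n 0" unfolding wbas_def using wbasis_gpiece[of m n "snd x" "fst x"] vx dx by simp
    show "\<gamma> (wbas x) = str_char m n (wbas x)" unfolding wbas_def using B vx dx unfolding agrees_on_g0_basis_def by blast
  qed
  have "\<gamma> Z = \<gamma> (wsum (wsupp Z) (wcoeff Z) wbas)" by (rule arg_cong[OF eZ])
  also have "\<dots> = (\<Sum>x\<in>wsupp Z. wcoeff Z x * \<gamma> (wbas x))" by (rule linear_g0_wsum[OF L f bz(1)])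
  also have "\<dots> = (\<Sum>x\<in>wsupp Z. wcoeff Z x * str_char m n (wbas x))" using bz(2) by simp
  also have "\<dots> = str_char m n (wsum (wsupp Z) (wcoeff Z) wbas)" by (simp add: str_char_wsum)
  also have "\<dots> = str_char m n Z" using eZ by simp
  finally show ?thesis .
qed

lemma gamma_values_str_char: "gamma_values m n (str_char m n :: 'a::comm_ring_1 wel \<Rightarrow> 'a)"
proof -
  have vl: "\<And>j. j \<in> {1..m} \<Longrightarrow> valid_der m n (Inl j)" "\<And>t. t \<in> {1..n} \<Longrightarrow> valid_der m n (Inr t)"
    by (auto simp: valid_der_def)
  show ?thesis unfolding gamma_values_def xd_def yd_def xD_def yD_def
    by (simp add: str_char_wbasis vl var_mono_def der_sign_def xmono_inj ymono_inj xmono_ymono xmono_ymono[symmetric])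
qed

lemma gamma_values_imp_agrees:
  assumes "gamma_values m n \<gamma>"
  shows "agrees_on_g0_basis m n (\<gamma> :: 'a::comm_ring_1 wel \<Rightarrow> 'a)"
  unfolding agrees_on_g0_basis_def
proof (intro allI impI)
  fix v k assume h: "valid_mono m n v \<and> mono_deg m v = 1 \<and> valid_der m n k"
  have g: "gamma_values m n (str_char m n :: 'a wel \<Rightarrow> 'a)" by (rule gamma_values_str_char)
  consider (x) i where "i \<in> {1..m}" "v = xmono i" | (y) r where "r \<in> {1..n}" "v = ymono r"
    using mono_deg_one_cases[of m n v] h by blast
  then show "\<gamma> (wbasis v k) = str_char m n (wbasis v k)"
  proof cases
    case x
    then show ?thesis using h assms g
      by (cases k) (auto simp: gamma_values_def xd_def xD_def valid_der_def)
  next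
    case y
    then show ?thesis using h assms g
      by (cases k) (auto simp: gamma_values_def yd_def yD_def valid_der_def)
  qed
qed

lemma agrees_imp_gamma_values:
  assumes "agrees_on_g0_basis m n \<gamma>"
  shows "gamma_values m n (\<gamma> :: 'a::comm_ring_1 wel \<Rightarrow> 'a)"
proof -
  have g: "gamma_values m n (str_char m n :: 'a wel \<Rightarrow> 'a)" by (rule gamma_values_str_char)
  have e: "\<gamma> (wbasis v k) = str_char m n (wbasis v k)" if "valid_mono m n v" "mono_deg m v = 1" "valid_der m n k" for v k
    using assms that unfolding agrees_on_g0_basis_def by blast
  have ex: "\<And>i. i \<in> {1..m} \<Longrightarrow> valid_mono m n (xmono i) \<and> mono_deg m (xmono i) = 1"
    by (simp add: valid_xmono deg_xmono)
  have ey: "\<And>r. r \<in> {1..n} \<Longrightarrow> valid_mono m n (ymono r) \<and> mono_deg m (ymono r) = 1"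
    by (simp add: valid_ymono deg_ymono)
  have vl: "\<And>j. j \<in> {1..m} \<Longrightarrow> valid_der m n (Inl j)" "\<And>t. t \<in> {1..n} \<Longrightarrow> valid_der m n (Inr t)"
    by (auto simp: valid_der_def)
  show ?thesis using g unfolding gamma_values_def xd_def yd_def xD_def yD_def
    using e ex ey vl by simp
qed

lemma SI2_imp_agrees:
  assumes m: "1 \<le> m" and L: "linear_g0 m n \<gamma>" and S: "SI2 m n \<gamma>"
  shows "agrees_on_g0_basis m n (\<gamma> :: 'a::field_char_0 wel \<Rightarrow> 'a)"
  unfolding agrees_on_g0_basis_def
proof (intro allI impI)
  fix v k assume h: "valid_mono m n v \<and> mono_deg m v = 1 \<and> valid_der m n k"
  have m1: "1 \<in> {1..m}" using m by simp
  define f where "f = mono_add (xmono 1) v"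
  have vf: "valid_mono m n f" unfolding f_def using valid_mono_add[OF valid_xmono[OF m1]] h by blast
  have df: "mono_deg m f = 2"
    unfolding f_def using mono_deg_add[OF valid_xmono[OF m1], where b=v and n=n] h deg_xmono[OF m1] by (simp add: xmono_def)
  have vk: "valid_der m n k" using h by blast
  have v1: "valid_der m n (Inl 1)" using m by (simp add: valid_der_def)
  have X: "(wbasis f k :: 'a wel) \<in> gpiece m n 1" using wbasis_gpiece[OF vf vk] df by simp
  have Y: "(wbasis mono_one (Inl 1) :: 'a wel) \<in> gpiece m n (-1)" using wbasis_gpiece[OF valid_mono_one v1] mono_deg_one by simp
  have Bv: "(wbasis v k :: 'a wel) \<in> gpiece m n 0" using wbasis_gpiece[of m n v k] h by simp
  define K :: 'a where "K = - ((-1) ^ (par k f * par (Inl 1) mono_one) * der_coeff (Inl 1) f)"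
  have K: "K = - of_nat (fst v 1 + 1)" unfolding K_def f_def by (simp add: par_mono_one der_coeff_Inl_add_xmono)
  have "(of_nat (fst v 1 + 1) :: 'a) \<noteq> 0" by (simp only: of_nat_eq_0_iff)
  then have Knz: "K \<noteq> 0" unfolding K by (metis neg_equal_0_iff_equal)
  have br: "(wbr m n (wbasis f k) (wbasis mono_one (Inl 1)) :: 'a wel) = wsmul K (wbasis v k)"
    unfolding wbr_wbasis_mono_one_right[OF vk v1 vf] K_def by (simp only: f_def der_mono_Inl_add_xmono)
  have "\<gamma> (wbr m n (wbasis f k) (wbasis mono_one (Inl 1))) = str0 m n (\<lambda>Z. wbr m n (wbasis f k) (wbr m n (wbasis mono_one (Inl 1)) Z))"
    using S X Y by (simp add: SI2_def)
  also have "\<dots> = str_char m n (wbr m n (wbasis f k) (wbasis mono_one (Inl 1)))" using str_char_wbr_eq_str0[OF X Y] by simp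
  finally have "\<gamma> (wsmul K (wbasis v k)) = str_char m n (wsmul K (wbasis v k))" unfolding br .
  then have "K * \<gamma> (wbasis v k) = K * str_char m n (wbasis v k)"
    using L Bv by (simp add: linear_g0_def str_char_wsmul)
  then show "\<gamma> (wbasis v k) = str_char m n (wbasis v k)" using Knz by simp
qed

lemma str_char_h_elem:
  "str_char m n (h_elem m n a b) = (\<Sum>i=1..m. a i) - (\<Sum>s=1..n. (b s :: 'a::comm_ring_1))"
proof -
  have e: "h_elem m n a b = wadd (wsum {1..m} a (\<lambda>i. xd i i)) (wsum {1..n} b (\<lambda>s. yD s s))"
    by (simp add: h_elem_def wadd_def wsum_def fun_eq_iff)
  have x_part: "(\<Sum>i=1..m. a i * str_char m n (xd i i :: 'a wel)) = (\<Sum>i=1..m. a i)"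
  proof (rule sum.cong[OF refl])
    fix i assume "i \<in> {1..m}"
    then have "valid_der m n (Inl i)" by (simp add: valid_der_def)
    then show "a i * str_char m n (xd i i :: 'a wel) = a i"
      by (simp add: xd_def str_char_wbasis var_mono_def der_sign_def)
  qed
  have y_part: "(\<Sum>s=1..n. b s * str_char m n (yD s s :: 'a wel)) = - (\<Sum>s=1..n. b s)"
  proof -
    have "(\<Sum>s=1..n. b s * str_char m n (yD s s :: 'a wel)) = (\<Sum>s=1..n. - b s)"
    proof (rule sum.cong[OF refl])
      fix s assume "s \<in> {1..n}"
      then have "valid_der m n (Inr s)" by (simp add: valid_der_def)
      then show "b s * str_char m n (yD s s :: 'a wel) = - b s"
        by (simp add: yD_def str_char_wbasis var_mono_def der_sign_def)
    qed
    then show ?thesis by (simp add: sum_negf)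
  qed
  show ?thesis unfolding e str_char_wadd str_char_wsum x_part y_part by simp
qed

lemma SI2_iff_gamma_values:
  assumes m: "1 \<le> m" and L: "linear_g0 m n \<gamma>"
  shows "SI2 m n \<gamma> \<longleftrightarrow> gamma_values m n (\<gamma> :: 'a::field_char_0 wel \<Rightarrow> 'a)"
proof
  assume "SI2 m n \<gamma>"
  then show "gamma_values m n \<gamma>" by (rule agrees_imp_gamma_values[OF SI2_imp_agrees[OF m L]])
next
  assume "gamma_values m n \<gamma>"
  then have agrees: "agrees_on_g0_basis m n \<gamma>" by (rule gamma_values_imp_agrees)
  show "SI2 m n \<gamma>" unfolding SI2_def
  proof (intro ballI)
    fix X Y :: "'a wel" assume X: "X \<in> gpiece m n 1" and Y: "Y \<in> gpiece m n (-1)"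
    have "wbr m n X Y \<in> gpiece m n (1 + -1)" by (rule wbr_gpiece[OF X Y])
    then have "\<gamma> (wbr m n X Y) = str_char m n (wbr m n X Y)" using linear_g0_eq_str_char[OF L agrees] by simp
    also have "\<dots> = str0 m n (\<lambda>Z. wbr m n X (wbr m n Y Z))" by (rule str_char_wbr_eq_str0[OF X Y])
    finally show "\<gamma> (wbr m n X Y) = str0 m n (\<lambda>Z. wbr m n X (wbr m n Y Z))" .
  qed
qed

lemma semi_infinite_W_str_char:
  assumes "1 \<le> m" "1 \<le> n"
  shows "semi_infinite_W m n (str_char m n :: 'a::field_char_0 wel \<Rightarrow> 'a)"
  unfolding semi_infinite_W_def character_g0_def SI1_def SI2_def
  by (simp add: linear_g0_str_char str_char_wbr_g0 lie_gen_local_part[OF assms] str_char_wbr_eq_str0)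

lemma semi_infinite_W_eq_str_char:
  assumes m: "1 \<le> m" and \<gamma>: "semi_infinite_W m n \<gamma>" and Z: "Z \<in> gpiece m n 0"
  shows "\<gamma> Z = str_char m n (Z :: 'a::field_char_0 wel)"
proof -
  have L: "linear_g0 m n \<gamma>" and S: "SI2 m n \<gamma>"
    using \<gamma> by (auto simp: semi_infinite_W_def character_g0_def)
  show ?thesis by (rule linear_g0_eq_str_char[OF L SI2_imp_agrees[OF m L S] Z])
qed

theorem mainTheorem14:
  fixes m n :: nat
  assumes "1 \<le> m" and "1 \<le> n" and "alg_closed TYPE('a::field_char_0)"
  shows "(lie_gen m n (gpiece m n (-1) \<union> gpiece m n 0 \<union> gpiece m n 1) = (Wc m n :: 'a wel set)) \<and>
    (\<forall>\<gamma> :: 'a wel \<Rightarrow> 'a. linear_g0 m n \<gamma> \<longrightarrow> (SI2 m n \<gamma> \<longleftrightarrow> gamma_values m n \<gamma>)) \<and>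
    (\<exists>\<gamma> :: 'a wel \<Rightarrow> 'a. semi_infinite_W m n \<gamma> \<and> gamma_values m n \<gamma> \<and>
           (\<forall>\<gamma>'. semi_infinite_W m n \<gamma>' \<longrightarrow> (\<forall>Z\<in>gpiece m n 0. \<gamma>' Z = \<gamma> Z)) \<and>
           (\<forall>a b. \<gamma> (h_elem m n a b) = (\<Sum>i=1..m. a i) - (\<Sum>s=1..n. b s)))"
proof -
  have "lie_gen m n (gpiece m n (-1) \<union> gpiece m n 0 \<union> gpiece m n 1) = (Wc m n :: 'a wel set)"
    by (rule lie_gen_local_part[OF assms(1,2)])
  moreover have "\<forall>\<gamma> :: 'a wel \<Rightarrow> 'a. linear_g0 m n \<gamma> \<longrightarrow> (SI2 m n \<gamma> \<longleftrightarrow> gamma_values m n \<gamma>)"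
    using SI2_iff_gamma_values[OF assms(1)] by blast
  moreover have "\<exists>\<gamma> :: 'a wel \<Rightarrow> 'a. semi_infinite_W m n \<gamma> \<and> gamma_values m n \<gamma> \<and>
      (\<forall>\<gamma>'. semi_infinite_W m n \<gamma>' \<longrightarrow> (\<forall>Z\<in>gpiece m n 0. \<gamma>' Z = \<gamma> Z)) \<and>
      (\<forall>a b. \<gamma> (h_elem m n a b) = (\<Sum>i=1..m. a i) - (\<Sum>s=1..n. b s))"
    using semi_infinite_W_str_char[OF assms(1,2)] gamma_values_str_char
      semi_infinite_W_eq_str_char[OF assms(1)] str_char_h_elem
    by (intro exI[of _ "str_char m n"] conjI allI impI ballI) auto
  ultimately show ?thesis by (intro conjI)
qed

end
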